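(* Let $0<\alpha<1$, $k\ge1$, $\varphi_{\text{in}}>0$, and let $G=(V_G,E_G)$ be a $(k,\varphi_{\text{in}})$-clusterable graph with minimum degree at least $1$. Then there exists $V'_G\subseteq V_G$ with $\mathrm{vol}(V'_G)\ge(1-\alpha)\mathrm{vol}(V_G)$ such that for every integer $t\ge\frac{2\ln(\mathrm{vol}(V_G))}{\varphi_{\text{in}}^2}$ and every $u\in V'_G$, $\|D^{-1/2}M^t\mathbb{1}_u\|_2^2\le\frac{2k}{\alpha\,\mathrm{vol}(V_G)}$.
   Context: $A$ adjacency matrix, $D$ diagonal degree matrix, $M=(I+AD^{-1})/2$ lazy random walk matrix. $\mathrm{vol}(S)=\sum_{v\in S}\deg(v)$; $\phi^G_C(S)=|E(S,C\setminus S)|/\mathrm{vol}(S)$; $\phi^G(C)=\min\{\phi^G_C(S):S\subseteq C,0<\mathrm{vol}(S)\le\mathrm{vol}(C)/2\}$ if $|C|>1$, else $1$. $G$ is $(k,\varphi)$-clusterable if $V_G$ can be partitioned into $h\le k$ sets $C_i$ with $\phi^G(C_i)\ge\varphi$. *)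

theory Defs
  imports Complex_Main
begin

definition graph :: "'a set \<Rightarrow> ('a \<Rightarrow> 'a \<Rightarrow> bool) \<Rightarrow> bool" where
  "graph V E \<longleftrightarrow> finite V \<and> (\<forall>x y. E x y \<longrightarrow> x \<in> V \<and> y \<in> V)
     \<and> (\<forall>x y. E x y \<longrightarrow> E y x) \<and> (\<forall>x. \<not> E x x)"

definition deg :: "'a set \<Rightarrow> ('a \<Rightarrow> 'a \<Rightarrow> bool) \<Rightarrow> 'a \<Rightarrow> nat" where
  "deg V E v = card {w \<in> V. E v w}"

definition vol :: "'a set \<Rightarrow> ('a \<Rightarrow> 'a \<Rightarrow> bool) \<Rightarrow> 'a set \<Rightarrow> real" where
  "vol V E S = (\<Sum>v\<in>S. real (deg V E v))"

text \<open>Number of edges between S and C - S (S and C - S are disjoint, so each edge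
is counted once as an ordered pair).\<close>
definition cut_edges :: "('a \<Rightarrow> 'a \<Rightarrow> bool) \<Rightarrow> 'a set \<Rightarrow> 'a set \<Rightarrow> nat" where
  "cut_edges E S C = card {(x, y). x \<in> S \<and> y \<in> C - S \<and> E x y}"

definition cond_in :: "'a set \<Rightarrow> ('a \<Rightarrow> 'a \<Rightarrow> bool) \<Rightarrow> 'a set \<Rightarrow> 'a set \<Rightarrow> real" where
  "cond_in V E C S = real (cut_edges E S C) / vol V E S"

definition cond :: "'a set \<Rightarrow> ('a \<Rightarrow> 'a \<Rightarrow> bool) \<Rightarrow> 'a set \<Rightarrow> real" where
  "cond V E C = (if card C > 1 then
      Min {cond_in V E C S | S. S \<subseteq> C \<and> 0 < vol V E S \<and> vol V E S \<le> vol V E C / 2}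
    else 1)"

definition clusterable :: "'a set \<Rightarrow> ('a \<Rightarrow> 'a \<Rightarrow> bool) \<Rightarrow> nat \<Rightarrow> real \<Rightarrow> bool" where
  "clusterable V E k \<phi> \<longleftrightarrow> (\<exists>P. finite P \<and> card P \<le> k \<and> (\<forall>C\<in>P. C \<noteq> {})
     \<and> (\<forall>C\<in>P. \<forall>C'\<in>P. C \<noteq> C' \<longrightarrow> C \<inter> C' = {}) \<and> \<Union>P = V
     \<and> (\<forall>C\<in>P. cond V E C \<ge> \<phi>))"

text \<open>Lazy random walk M = (I + A D^{-1})/2 applied t times to the vector p.\<close>
fun walk :: "'a set \<Rightarrow> ('a \<Rightarrow> 'a \<Rightarrow> bool) \<Rightarrow> nat \<Rightarrow> ('a \<Rightarrow> real) \<Rightarrow> 'a \<Rightarrow> real" where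
  "walk V E 0 p = p"
| "walk V E (Suc t) p = (\<lambda>v. let q = walk V E t p in
      (q v + (\<Sum>w\<in>{w \<in> V. E v w}. q w / real (deg V E w))) / 2)"

definition indicator_vec :: "'a \<Rightarrow> 'a \<Rightarrow> real" where
  "indicator_vec u = (\<lambda>v. if v = u then 1 else 0)"

definition Dnorm_sq :: "'a set \<Rightarrow> ('a \<Rightarrow> 'a \<Rightarrow> bool) \<Rightarrow> ('a \<Rightarrow> real) \<Rightarrow> real" where
  "Dnorm_sq V E x = (\<Sum>v\<in>V. (x v)\<^sup>2 / real (deg V E v))"

end

theory Submission
  imports Defs "HOL-Analysis.Analysis"
begin

(* Let N = D^(-1/2) M D^(1/2), so that ||D^(-1/2) M^t 1_u||^2 = ||N^t 1_u||^2 / deg u.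
   Inside each cluster C a Cheeger-type inequality bounds the quadratic form <x, N x> by
   (1 - phi^2/4) ||x||^2 whenever x is orthogonal to the k vectors D^(1/2) 1_C.  Hence
   N has at most k orthonormal eigenvectors v_j with eigenvalue above r = 1 - phi^2/4, and
   on their orthogonal complement N^t contracts by r^t <= vol(V)^(-1/2).  This gives
   ||N^t 1_u||^2 <= sum_j v_j(u)^2 + 1/vol(V), whose sum over u is at most k + 1 <= 2k;
   Markov's inequality for the degree measure then yields the set V'. *)

lemma quadratic_nonneg_discriminant:
  fixes a b c :: real
  assumes "\<And>t. 0 \<le> a + 2 * b * t + c * t\<^sup>2" and "c \<ge> 0"
  shows "b\<^sup>2 \<le> a * c"
proof (cases "c = 0")
  case True
  show ?thesis
  proof (cases "b = 0")
    case False
    have "0 \<le> a + 2 * b * (- (a + 1) / (2 * b)) + c * (- (a + 1) / (2 * b))\<^sup>2" by (rule assms(1))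
    also have "\<dots> = -1" using True False by (simp add: field_simps)
    finally show ?thesis by simp
  qed (use True in simp)
next
  case False
  hence c: "c > 0" using assms(2) by simp
  have "0 \<le> a + 2 * b * (- b / c) + c * (- b / c)\<^sup>2" by (rule assms(1))
  also have "\<dots> = a - b\<^sup>2 / c" using c by (simp add: field_simps power2_eq_square)
  finally show ?thesis using c by (simp add: field_simps mult.commute)
qed

lemma homogeneous_system_nontrivial_solution:
  fixes F :: "('j \<Rightarrow> real) set" and J :: "'j set"
  assumes "finite J" "finite F" "card F < card J"
  shows "\<exists>c. (\<exists>j\<in>J. c j \<noteq> 0) \<and> (\<forall>a\<in>F. (\<Sum>j\<in>J. a j * c j) = 0)"
  using assms
proof (induction "card F" arbitrary: F J rule: less_induct)
  case less
  show ?case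
  proof (cases "F = {}")
    case True
    with less.prems obtain j where "j \<in> J" by fastforce
    thus ?thesis using True by (intro exI[of _ "\<lambda>_. 1"]) auto
  next
    case False
    then obtain a where aF: "a \<in> F" by auto
    have card_less: "card (F - {a}) < card F" using aF less.prems by (meson card_Diff1_less)
    show ?thesis
    proof (cases "\<forall>j\<in>J. a j = 0")
      case True
      have "card (F - {a}) < card J" using card_less less.prems by linarith
      then obtain c where c: "\<exists>j\<in>J. c j \<noteq> 0" "\<forall>b\<in>F - {a}. (\<Sum>j\<in>J. b j * c j) = 0"
        using less.hyps[OF card_less less.prems(1)] less.prems by auto
      thus ?thesis using True by (intro exI[of _ c]) auto
    next
      case False
      then obtain j0 where j0: "j0 \<in> J" "a j0 \<noteq> 0" by auto
      \<comment> \<open>Gaussian elimination of the unknown \<open>j0\<close> by means of the equation \<open>a\<close>.\<close>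
      define J' where "J' = J - {j0}"
      define elim where "elim = (\<lambda>b::'j \<Rightarrow> real. \<lambda>j. b j - b j0 / a j0 * a j)"
      define F' where "F' = elim ` (F - {a})"
      have "card F' \<le> card (F - {a})" unfolding F'_def by (rule card_image_le) (use less.prems in auto)
      moreover have "card (F - {a}) = card F - 1" "card J' = card J - 1"
        using aF j0 less.prems by (auto simp: J'_def card_Diff_singleton)
      ultimately have "card F' < card F" "card F' < card J'" using card_less less.prems(3) by linarith+
      then obtain c' where c': "\<exists>j\<in>J'. c' j \<noteq> 0" "\<forall>b\<in>F'. (\<Sum>j\<in>J'. b j * c' j) = 0"
        using less.hyps[of F' J'] less.prems unfolding F'_def J'_def by auto
      define c where "c = c'(j0 := - (\<Sum>j\<in>J'. a j * c' j) / a j0)"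
      have split: "(\<Sum>j\<in>J. b j * c j) = b j0 * c j0 + (\<Sum>j\<in>J'. b j * c' j)" for b
      proof -
        have "(\<Sum>j\<in>J. b j * c j) = b j0 * c j0 + (\<Sum>j\<in>J'. b j * c j)"
          unfolding J'_def using j0 less.prems by (simp add: sum.remove)
        also have "(\<Sum>j\<in>J'. b j * c j) = (\<Sum>j\<in>J'. b j * c' j)"
          by (rule sum.cong) (auto simp: c_def J'_def)
        finally show ?thesis .
      qed
      have "(\<Sum>j\<in>J. b j * c j) = 0" if bF: "b \<in> F" for b
      proof (cases "b = a")
        case True
        thus ?thesis using split[of a] j0 by (simp add: c_def)
      next
        case False
        hence "(\<Sum>j\<in>J'. elim b j * c' j) = 0" using c' bF unfolding F'_def by auto
        hence "(\<Sum>j\<in>J'. b j * c' j) - b j0 / a j0 * (\<Sum>j\<in>J'. a j * c' j) = 0"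
          unfolding elim_def by (simp add: algebra_simps sum_subtractf sum_distrib_left)
        thus ?thesis using split[of b] j0 by (simp add: c_def field_simps)
      qed
      moreover have "\<exists>j\<in>J. c j \<noteq> 0" using c' by (auto simp: c_def J'_def)
      ultimately show ?thesis by blast
    qed
  qed
qed

lemma lazy_decay_le_inverse:
  fixes \<phi> z :: real and t :: nat
  assumes "\<phi> > 0" "z > 0" and t: "real t \<ge> 2 * ln z / \<phi>\<^sup>2"
  shows "((max 0 (1 - \<phi>\<^sup>2 / 4))\<^sup>2) ^ t \<le> 1 / z"
proof -
  have "max 0 (1 - \<phi>\<^sup>2 / 4) \<le> exp (- (\<phi>\<^sup>2 / 4))" using exp_ge_add_one_self[of "- (\<phi>\<^sup>2 / 4)"] by simp
  hence "((max 0 (1 - \<phi>\<^sup>2 / 4))\<^sup>2) ^ t \<le> (exp (- (\<phi>\<^sup>2 / 4))) ^ (2 * t)"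
    unfolding power_mult[symmetric] by (intro power_mono) auto
  also have "\<dots> = exp (- (\<phi>\<^sup>2 * real t / 2))" by (simp add: exp_of_nat_mult[symmetric] field_simps)
  also have "\<dots> \<le> exp (- ln z)" using t assms(1) by (simp add: divide_le_eq mult.commute)
  also have "\<dots> = 1 / z" using assms(2) by (simp add: exp_minus inverse_eq_divide)
  finally show ?thesis .
qed

lemma pos_neg_parts_sq_dist_le:
  fixes p q :: real
  shows "(max p 0 - max q 0)\<^sup>2 + (max (-p) 0 - max (-q) 0)\<^sup>2 \<le> (p - q)\<^sup>2"
proof (cases "p \<ge> 0"; cases "q \<ge> 0")
  assume "p \<ge> 0" "\<not> q \<ge> 0"
  hence "0 \<le> p * (-q)" by (intro mult_nonneg_nonneg) auto
  thus ?thesis using \<open>p \<ge> 0\<close> \<open>\<not> q \<ge> 0\<close> by (simp add: max_def power2_eq_square algebra_simps)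
next
  assume "\<not> p \<ge> 0" "q \<ge> 0"
  hence "0 \<le> (-p) * q" by (intro mult_nonneg_nonneg) auto
  thus ?thesis using \<open>\<not> p \<ge> 0\<close> \<open>q \<ge> 0\<close> by (simp add: max_def power2_eq_square algebra_simps)
qed (auto simp: max_def power2_eq_square algebra_simps)

locale pos_deg_graph =
  fixes V :: "'a set" and E :: "'a \<Rightarrow> 'a \<Rightarrow> bool"
  assumes graph: "graph V E" and deg_ge_1: "\<forall>v\<in>V. deg V E v \<ge> 1"
begin

abbreviation d :: "'a \<Rightarrow> real" where "d v \<equiv> real (deg V E v)"

definition sd :: "'a \<Rightarrow> real" where "sd v = sqrt (d v)"

lemma finite_V: "finite V" using graph by (simp add: graph_def)
lemma edge_sym: "E a b \<Longrightarrow> E b a" using graph by (simp add: graph_def)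
lemma d_ge_1: "v \<in> V \<Longrightarrow> d v \<ge> 1" using deg_ge_1 by auto
lemma d_pos: "v \<in> V \<Longrightarrow> d v > 0" using d_ge_1[of v] by linarith
lemma sd_pos: "v \<in> V \<Longrightarrow> sd v > 0" using d_pos[of v] by (simp add: sd_def)
lemma sd_sq: "v \<in> V \<Longrightarrow> sd v * sd v = d v" using d_pos[of v] by (simp add: sd_def)

lemma finite_subset_V: "C \<subseteq> V \<Longrightarrow> finite C" using finite_V finite_subset by blast

lemma vol_nonneg: "vol V E S \<ge> 0" unfolding vol_def by (intro sum_nonneg) auto

lemma vol_pos: "S \<subseteq> V \<Longrightarrow> S \<noteq> {} \<Longrightarrow> vol V E S > 0"
  unfolding vol_def by (intro sum_pos finite_subset_V) (use d_pos in \<open>auto simp del: of_nat_0_less_iff\<close>)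

lemma vol_mono: "S \<subseteq> T \<Longrightarrow> T \<subseteq> V \<Longrightarrow> vol V E S \<le> vol V E T"
  unfolding vol_def by (intro sum_mono2) (auto intro: finite_subset_V)

lemma vol_diff: "S \<subseteq> T \<Longrightarrow> T \<subseteq> V \<Longrightarrow> vol V E (T - S) = vol V E T - vol V E S"
  unfolding vol_def by (simp add: sum_diff finite_subset_V)

lemma card_le_vol: "real (card V) \<le> vol V E V"
proof -
  have "real (card V) = (\<Sum>u\<in>V. 1)" by simp
  also have "\<dots> \<le> vol V E V" unfolding vol_def using d_ge_1 by (intro sum_mono) auto
  finally show ?thesis .
qed

lemma edge_count: "a \<in> V \<Longrightarrow> (\<Sum>b\<in>V. if E a b then 1 else 0) = d a"
  by (simp add: deg_def sum.inter_filter[OF finite_V, symmetric])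

lemma edge_sum_swap:
  "(\<Sum>a\<in>C. \<Sum>b\<in>C. if E a b then f a b else 0) = (\<Sum>a\<in>C. \<Sum>b\<in>C. if E a b then f b a else (0::real))"
  by (subst sum.swap) (intro sum.cong refl, metis edge_sym)

lemma edge_sum_left: "(\<Sum>a\<in>V. \<Sum>b\<in>V. if E a b then f a else 0) = (\<Sum>a\<in>V. d a * f a)"
proof (intro sum.cong refl)
  fix a assume "a \<in> V"
  have "(\<Sum>b\<in>V. if E a b then f a else 0) = f a * (\<Sum>b\<in>V. if E a b then 1 else 0)"
    by (simp add: sum_distrib_left if_distrib cong: if_cong)
  thus "(\<Sum>b\<in>V. if E a b then f a else 0) = d a * f a" using edge_count[OF \<open>a \<in> V\<close>] by simp
qed

section \<open>The normalized lazy walk operator\<close>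

definition inner_V :: "('a \<Rightarrow> real) \<Rightarrow> ('a \<Rightarrow> real) \<Rightarrow> real" where
  "inner_V x y = (\<Sum>v\<in>V. x v * y v)"

definition norm_sq :: "('a \<Rightarrow> real) \<Rightarrow> real" where
  "norm_sq x = inner_V x x"

definition supported :: "('a \<Rightarrow> real) \<Rightarrow> bool" where
  "supported x \<longleftrightarrow> (\<forall>v. v \<notin> V \<longrightarrow> x v = 0)"

definition walk_kernel :: "'a \<Rightarrow> 'a \<Rightarrow> real" where
  "walk_kernel v w = ((if v = w then 1 else 0) + (if E v w then 1 / (sd v * sd w) else 0)) / 2"

text \<open>\<open>N = D\<^sup>-\<^sup>1\<^sup>/\<^sup>2 M D\<^sup>1\<^sup>/\<^sup>2 = (I + D\<^sup>-\<^sup>1\<^sup>/\<^sup>2 A D\<^sup>-\<^sup>1\<^sup>/\<^sup>2) / 2\<close>, the symmetric matrix similar to the lazy walk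
  matrix \<open>M\<close>.\<close>

definition sym_walk :: "('a \<Rightarrow> real) \<Rightarrow> 'a \<Rightarrow> real" where
  "sym_walk x = (\<lambda>v. if v \<in> V then \<Sum>w\<in>V. walk_kernel v w * x w else 0)"

definition adj_form :: "('a \<Rightarrow> real) \<Rightarrow> ('a \<Rightarrow> real) \<Rightarrow> real" where
  "adj_form x y = (\<Sum>a\<in>V. \<Sum>b\<in>V. if E a b then x a * y b / (sd a * sd b) else 0)"

definition qform :: "('a \<Rightarrow> real) \<Rightarrow> real" where
  "qform x = inner_V x (sym_walk x)"

definition energy :: "('a \<Rightarrow> real) \<Rightarrow> real" where
  "energy x = (\<Sum>a\<in>V. \<Sum>b\<in>V. if E a b then (x a / sd a - x b / sd b)\<^sup>2 else 0)"

lemma inner_V_commute: "inner_V x y = inner_V y x"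
  unfolding inner_V_def by (simp add: mult.commute)

lemma inner_V_cong:
  "(\<And>v. v \<in> V \<Longrightarrow> x v = x' v) \<Longrightarrow> (\<And>v. v \<in> V \<Longrightarrow> y v = y' v) \<Longrightarrow> inner_V x y = inner_V x' y'"
  unfolding inner_V_def by (intro sum.cong refl) auto

lemma inner_V_add_scale:
  "inner_V (\<lambda>a. p * x a + q * y a) z = p * inner_V x z + q * inner_V y z"
  unfolding inner_V_def by (simp add: sum.distrib sum_distrib_left algebra_simps)

lemma inner_V_sum_left:
  "inner_V (\<lambda>a. \<Sum>j\<in>J. c j * f j a) z = (\<Sum>j\<in>J. c j * inner_V (f j) z)"
  unfolding inner_V_def
  by (simp add: sum_distrib_left sum_distrib_right sum.swap[of _ V] algebra_simps)

lemma inner_V_sum_right: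
  "inner_V z (\<lambda>a. \<Sum>j\<in>J. c j * f j a) = (\<Sum>j\<in>J. c j * inner_V z (f j))"
  by (subst (1 2) inner_V_commute) (rule inner_V_sum_left)

lemma inner_V_scale: "inner_V (\<lambda>a. c * x a) y = c * inner_V x y"
  unfolding inner_V_def by (simp add: sum_distrib_left mult.assoc)

lemma norm_sq_nonneg: "norm_sq x \<ge> 0"
  unfolding norm_sq_def inner_V_def by (intro sum_nonneg) auto

lemma norm_sq_eq_0D: "norm_sq x = 0 \<Longrightarrow> v \<in> V \<Longrightarrow> x v = 0"
  unfolding norm_sq_def inner_V_def using finite_V by (subst (asm) sum_nonneg_eq_0_iff) auto

lemma norm_sq_scale: "norm_sq (\<lambda>v. c * x v) = c\<^sup>2 * norm_sq x"
  unfolding norm_sq_def inner_V_def by (simp add: sum_distrib_left power2_eq_square algebra_simps)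

lemma norm_sq_add_scale: "norm_sq (\<lambda>a. x a + t * y a) = norm_sq x + 2 * t * inner_V x y + t\<^sup>2 * norm_sq y"
  unfolding norm_sq_def inner_V_def
  by (simp add: sum.distrib sum_distrib_left power2_eq_square algebra_simps)

lemma inner_V_indicator: "u \<in> V \<Longrightarrow> inner_V (indicator_vec u) y = y u"
proof -
  assume u: "u \<in> V"
  have "inner_V (indicator_vec u) y = (\<Sum>v\<in>V. if v = u then y v else 0)"
    unfolding inner_V_def indicator_vec_def by (rule sum.cong) auto
  also have "\<dots> = y u" using finite_V u by simp
  finally show ?thesis .
qed

lemma supported_sym_walk: "supported (sym_walk x)"
  unfolding supported_def sym_walk_def by simp

lemma sym_walk_add_scale:
  "sym_walk (\<lambda>a. p * x a + q * y a) = (\<lambda>a. p * sym_walk x a + q * sym_walk y a)"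
  unfolding sym_walk_def by (auto simp: sum.distrib sum_distrib_left algebra_simps)

lemma sym_walk_scale: "sym_walk (\<lambda>a. c * x a) = (\<lambda>a. c * sym_walk x a)"
  unfolding sym_walk_def by (auto simp: sum_distrib_left mult_ac)

lemma sym_walk_sum:
  "sym_walk (\<lambda>a. \<Sum>j\<in>J. c j * f j a) = (\<lambda>a. \<Sum>j\<in>J. c j * sym_walk (f j) a)"
  unfolding sym_walk_def by (auto simp: sum_distrib_left sum.swap[of _ V] algebra_simps)

lemma inner_V_sym_walk: "inner_V x (sym_walk y) = (inner_V x y + adj_form x y) / 2"
proof -
  have "inner_V x (sym_walk y) = (\<Sum>v\<in>V. (x v * y v + (\<Sum>w\<in>V. if E v w then x v * y w / (sd v * sd w) else 0)) / 2)"
  proof (unfold inner_V_def, rule sum.cong[OF refl])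
    fix v assume v: "v \<in> V"
    have "x v * sym_walk y v
        = (\<Sum>w\<in>V. ((if v = w then x v * y w else 0) + (if E v w then x v * y w / (sd v * sd w) else 0)) / 2)"
      using v by (simp add: sym_walk_def sum_distrib_left) (rule sum.cong, auto simp: walk_kernel_def field_simps)
    also have "\<dots> = (x v * y v + (\<Sum>w\<in>V. if E v w then x v * y w / (sd v * sd w) else 0)) / 2"
      using v finite_V by (simp add: sum_divide_distrib[symmetric] sum.distrib)
    finally show "x v * sym_walk y v = \<dots>" .
  qed
  also have "\<dots> = (inner_V x y + adj_form x y) / 2"
    by (simp add: inner_V_def adj_form_def sum_divide_distrib[symmetric] sum.distrib)
  finally show ?thesis .
qed

lemma adj_form_commute: "adj_form x y = adj_form y x"
  unfolding adj_form_def by (subst edge_sum_swap) (simp only: mult.commute)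

lemma sym_walk_self_adjoint: "inner_V (sym_walk x) y = inner_V x (sym_walk y)"
  by (metis inner_V_commute inner_V_sym_walk adj_form_commute)

lemma qform_eq: "qform x = (norm_sq x + adj_form x x) / 2"
  unfolding qform_def norm_sq_def by (rule inner_V_sym_walk)

lemma edge_sum_square:
  "(\<Sum>a\<in>V. \<Sum>b\<in>V. if E a b then (x a / sd a + s * (x b / sd b))\<^sup>2 else 0)
     = (1 + s\<^sup>2) * norm_sq x + 2 * s * adj_form x x"
proof -
  have end_sq: "(\<Sum>a\<in>V. \<Sum>b\<in>V. if E a b then (x a / sd a)\<^sup>2 else 0) = norm_sq x"
    unfolding edge_sum_left norm_sq_def inner_V_def
  proof (intro sum.cong refl)
    fix a assume a: "a \<in> V"
    show "d a * (x a / sd a)\<^sup>2 = x a * x a"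
      using sd_pos[OF a] unfolding sd_sq[OF a, symmetric] by (simp add: field_simps power2_eq_square)
  qed
  have sq: "(p / s' + s * (q / t))\<^sup>2 = (p / s')\<^sup>2 + s\<^sup>2 * (q / t)\<^sup>2 + 2 * s * (p * q / (s' * t))"
    for p q s' t :: real
    by (simp add: power2_sum power_mult_distrib power_divide mult_ac)
  have "(\<Sum>a\<in>V. \<Sum>b\<in>V. if E a b then (x a / sd a + s * (x b / sd b))\<^sup>2 else 0)
      = (\<Sum>a\<in>V. \<Sum>b\<in>V. (if E a b then (x a / sd a)\<^sup>2 else 0) + s\<^sup>2 * (if E a b then (x b / sd b)\<^sup>2 else 0)
                         + 2 * s * (if E a b then x a * x b / (sd a * sd b) else 0))"
    by (intro sum.cong refl) (subst sq, simp)
  also have "\<dots> = norm_sq x + s\<^sup>2 * norm_sq x + 2 * s * adj_form x x"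
    using end_sq edge_sum_swap[where C = V and f = "\<lambda>a b. (x a / sd a)\<^sup>2"]
    by (simp add: sum.distrib sum_distrib_left[symmetric] adj_form_def)
  finally show ?thesis by (simp add: algebra_simps)
qed

lemma qform_eq_energy: "qform x = norm_sq x - energy x / 4"
proof -
  have "(p - q)\<^sup>2 = (p + (-1) * q)\<^sup>2" for p q :: real by simp
  hence "energy x = (\<Sum>a\<in>V. \<Sum>b\<in>V. if E a b then (x a / sd a + (-1) * (x b / sd b))\<^sup>2 else 0)"
    unfolding energy_def by presburger
  also have "\<dots> = 2 * norm_sq x - 2 * adj_form x x" unfolding edge_sum_square by simp
  finally show ?thesis unfolding qform_eq by (simp add: field_simps)
qed

lemma qform_nonneg: "qform x \<ge> 0"
proof -
  have "0 \<le> (\<Sum>a\<in>V. \<Sum>b\<in>V. if E a b then (x a / sd a + 1 * (x b / sd b))\<^sup>2 else 0)"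
    by (intro sum_nonneg) auto
  thus ?thesis unfolding edge_sum_square qform_eq by simp
qed

lemma qform_le_norm_sq: "qform x \<le> norm_sq x"
proof -
  have "energy x \<ge> 0" unfolding energy_def by (intro sum_nonneg) auto
  thus ?thesis unfolding qform_eq_energy by simp
qed

lemma qform_cong:
  assumes "\<And>v. v \<in> V \<Longrightarrow> x v = y v"
  shows "qform x = qform y"
proof -
  have "norm_sq x = norm_sq y" unfolding norm_sq_def by (rule inner_V_cong) (simp_all add: assms)
  moreover have "adj_form x x = adj_form y y" unfolding adj_form_def by (intro sum.cong refl) (simp add: assms)
  ultimately show ?thesis unfolding qform_eq by simp
qed

lemma qform_scale: "qform (\<lambda>v. c * x v) = c\<^sup>2 * qform x"
  unfolding qform_def sym_walk_scale inner_V_def by (simp add: sum_distrib_left power2_eq_square mult_ac)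

lemma qform_add_scale:
  "qform (\<lambda>a. x a + t * y a) = qform x + 2 * t * inner_V x (sym_walk y) + t\<^sup>2 * qform y"
proof -
  have "sym_walk (\<lambda>a. x a + t * y a) = (\<lambda>a. sym_walk x a + t * sym_walk y a)"
    using sym_walk_add_scale[of 1 x t y] by simp
  hence "qform (\<lambda>a. x a + t * y a)
      = qform x + t * inner_V x (sym_walk y) + t * inner_V y (sym_walk x) + t\<^sup>2 * qform y"
    unfolding qform_def inner_V_def
    by (simp add: sum.distrib sum_distrib_left algebra_simps power2_eq_square)
  moreover have "inner_V y (sym_walk x) = inner_V x (sym_walk y)"
    by (metis sym_walk_self_adjoint inner_V_commute)
  ultimately show ?thesis by simp
qed

section \<open>Cheeger's inequality inside a cluster\<close>

definition expands :: "real \<Rightarrow> 'a set \<Rightarrow> bool" where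
  "expands \<phi> C \<longleftrightarrow> (\<forall>S\<subseteq>C. S \<noteq> {} \<longrightarrow> vol V E S \<le> vol V E C / 2 \<longrightarrow> \<phi> * vol V E S \<le> real (cut_edges E S C))"

definition dirichlet :: "'a set \<Rightarrow> ('a \<Rightarrow> real) \<Rightarrow> real" where
  "dirichlet C g = (\<Sum>a\<in>C. \<Sum>b\<in>C. if E a b then (g a - g b)\<^sup>2 else 0)"

lemma dirichlet_nonneg: "dirichlet C g \<ge> 0"
  unfolding dirichlet_def by (intro sum_nonneg) auto

lemma vol_filter_split: "finite C \<Longrightarrow> vol V E {a\<in>C. P a} + vol V E {a\<in>C. \<not> P a} = vol V E C"
  unfolding vol_def by (subst sum.union_disjoint[symmetric]) (auto intro: sum.cong)

lemma cut_edges_eq_sum: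
  assumes "C \<subseteq> V" "S \<subseteq> C"
  shows "real (cut_edges E S C) = (\<Sum>a\<in>S. \<Sum>b\<in>C - S. if E a b then 1 else 0)"
proof -
  have fin: "finite S" "finite C" using assms finite_subset_V by blast+
  have "{(x, y). x \<in> S \<and> y \<in> C - S \<and> E x y} = Sigma S (\<lambda>x. {y \<in> C - S. E x y})" by auto
  hence "cut_edges E S C = (\<Sum>x\<in>S. card {y \<in> C - S. E x y})"
    unfolding cut_edges_def using fin by (simp add: card_SigmaI)
  thus ?thesis using fin by (simp add: sum.inter_filter[symmetric])
qed

lemma edge_variation_indicator:
  assumes C: "C \<subseteq> V" and S: "S \<subseteq> C"
  shows "(\<Sum>a\<in>C. \<Sum>b\<in>C. if E a b then \<bar>indicator S a - indicator S b\<bar> else 0) = 2 * real (cut_edges E S C)"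
proof -
  have fin: "finite C" using C finite_subset_V by blast
  define f :: "'a \<Rightarrow> 'a \<Rightarrow> real" where "f a b = (if E a b then \<bar>indicator S a - indicator S b\<bar> else 0)" for a b
  have split: "(\<Sum>a\<in>C. g a) = (\<Sum>a\<in>C - S. g a) + (\<Sum>a\<in>S. g a)" for g :: "'a \<Rightarrow> real"
    by (rule sum.subset_diff[OF S fin])
  have out: "(\<Sum>b\<in>C. f a b) = (\<Sum>b\<in>S. if E a b then 1 else 0)" if "a \<in> C - S" for a
  proof -
    have "(\<Sum>b\<in>C - S. f a b) = 0" using that by (intro sum.neutral) (auto simp: f_def)
    moreover have "(\<Sum>b\<in>S. f a b) = (\<Sum>b\<in>S. if E a b then 1 else 0)"
      using that by (intro sum.cong) (auto simp: f_def)
    ultimately show ?thesis unfolding split[of "f a"] by simp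
  qed
  have inn: "(\<Sum>b\<in>C. f a b) = (\<Sum>b\<in>C - S. if E a b then 1 else 0)" if "a \<in> S" for a
  proof -
    have "(\<Sum>b\<in>S. f a b) = 0" using that by (intro sum.neutral) (auto simp: f_def)
    moreover have "(\<Sum>b\<in>C - S. f a b) = (\<Sum>b\<in>C - S. if E a b then 1 else 0)"
      using that by (intro sum.cong) (auto simp: f_def)
    ultimately show ?thesis unfolding split[of "f a"] by simp
  qed
  have "(\<Sum>a\<in>C - S. \<Sum>b\<in>C. f a b) = (\<Sum>a\<in>C - S. \<Sum>b\<in>S. if E a b then 1 else 0)"
    by (rule sum.cong[OF refl]) (rule out)
  also have "\<dots> = (\<Sum>b\<in>S. \<Sum>a\<in>C - S. if E b a then 1 else 0)"
    by (subst sum.swap) (intro sum.cong refl, metis edge_sym)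
  finally have "(\<Sum>a\<in>C. \<Sum>b\<in>C. f a b) = 2 * (\<Sum>a\<in>S. \<Sum>b\<in>C - S. if E a b then 1 else 0)"
    unfolding split[of "\<lambda>a. \<Sum>b\<in>C. f a b"] using inn by simp
  thus ?thesis unfolding f_def cut_edges_eq_sum[OF C S] .
qed

lemma lower_level_split:
  assumes C: "C \<subseteq> V" and S: "S \<subseteq> C" and "m \<ge> 0"
    and s_out: "\<And>a. a \<in> C \<Longrightarrow> a \<notin> S \<Longrightarrow> s a = 0" and m_le: "\<And>a. a \<in> S \<Longrightarrow> m \<le> s a"
    and s': "\<And>a. s' a = (if a \<in> S then s a - m else 0)"
  shows "(\<Sum>a\<in>C. d a * s a) = (\<Sum>a\<in>C. d a * s' a) + m * vol V E S"
    and "(\<Sum>a\<in>C. \<Sum>b\<in>C. if E a b then \<bar>s a - s b\<bar> else 0)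
           = (\<Sum>a\<in>C. \<Sum>b\<in>C. if E a b then \<bar>s' a - s' b\<bar> else 0) + m * (2 * real (cut_edges E S C))"
proof -
  have "(\<Sum>a\<in>C. d a * s a) = (\<Sum>a\<in>C. d a * s' a + m * (d a * indicator S a))"
    by (intro sum.cong refl) (auto simp: s' s_out algebra_simps)
  also have "\<dots> = (\<Sum>a\<in>C. d a * s' a) + m * (\<Sum>a\<in>C. d a * indicator S a)"
    by (simp add: sum.distrib sum_distrib_left)
  also have "(\<Sum>a\<in>C. d a * indicator S a) = vol V E S"
    unfolding vol_def using S C finite_subset_V by (simp add: indicator_def sum.If_cases Int_absorb1)
  finally show "(\<Sum>a\<in>C. d a * s a) = (\<Sum>a\<in>C. d a * s' a) + m * vol V E S" .
  have split: "\<bar>s a - s b\<bar> = \<bar>s' a - s' b\<bar> + m * \<bar>indicator S a - indicator S b\<bar>"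
    if "a \<in> C" "b \<in> C" for a b
    using that s_out[of a] s_out[of b] m_le[of a] m_le[of b] \<open>m \<ge> 0\<close>
    by (cases "a \<in> S"; cases "b \<in> S") (auto simp: s')
  have "(\<Sum>a\<in>C. \<Sum>b\<in>C. if E a b then \<bar>s a - s b\<bar> else 0)
      = (\<Sum>a\<in>C. \<Sum>b\<in>C. (if E a b then \<bar>s' a - s' b\<bar> else 0)
                         + m * (if E a b then \<bar>indicator S a - indicator S b\<bar> else 0))"
    by (intro sum.cong refl) (simp add: split)
  also have "\<dots> = (\<Sum>a\<in>C. \<Sum>b\<in>C. if E a b then \<bar>s' a - s' b\<bar> else 0)
        + m * (\<Sum>a\<in>C. \<Sum>b\<in>C. if E a b then \<bar>indicator S a - indicator S b\<bar> else 0)"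
    by (simp add: sum.distrib sum_distrib_left)
  finally show "(\<Sum>a\<in>C. \<Sum>b\<in>C. if E a b then \<bar>s a - s b\<bar> else 0)
      = (\<Sum>a\<in>C. \<Sum>b\<in>C. if E a b then \<bar>s' a - s' b\<bar> else 0) + m * (2 * real (cut_edges E S C))"
    unfolding edge_variation_indicator[OF C S] .
qed

text \<open>A discrete coarea argument: peel off the lowest level set of \<open>s\<close> (induction on the size
  of the support); it contributes its volume times the expansion bound.\<close>

lemma coarea_inequality:
  assumes C: "C \<subseteq> V" and \<phi>: "\<phi> \<ge> 0" and exp: "expands \<phi> C"
    and s_nonneg: "\<And>a. a \<in> C \<Longrightarrow> s a \<ge> 0" and supp: "vol V E {a\<in>C. s a > 0} \<le> vol V E C / 2"
  shows "2 * \<phi> * (\<Sum>a\<in>C. d a * s a) \<le> (\<Sum>a\<in>C. \<Sum>b\<in>C. if E a b then \<bar>s a - s b\<bar> else 0)"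
  using s_nonneg supp
proof (induction "card {a\<in>C. s a > 0}" arbitrary: s rule: less_induct)
  case less
  define S where "S = {a\<in>C. s a > 0}"
  have SC: "S \<subseteq> C" by (auto simp: S_def)
  have finS: "finite S" using C SC finite_subset_V by blast
  show ?case
  proof (cases "S = {}")
    case True
    hence "\<forall>a\<in>C. s a = 0" using less.prems(1) by (force simp: S_def)
    thus ?thesis by (simp add: sum_nonneg)
  next
    case False
    define m where "m = Min (s ` S)"
    have "m \<in> s ` S" unfolding m_def using False finS by (intro Min_in) auto
    then obtain a0 where a0: "a0 \<in> S" "s a0 = m" by auto
    have m_le: "\<And>a. a \<in> S \<Longrightarrow> m \<le> s a" unfolding m_def using finS by auto
    have m_pos: "m > 0" using a0 by (auto simp: S_def)
    have s_out: "\<And>a. a \<in> C \<Longrightarrow> a \<notin> S \<Longrightarrow> s a = 0" using less.prems(1) by (force simp: S_def)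
    define s' where "s' a = (if a \<in> S then s a - m else 0)" for a
    note split = lower_level_split[OF C SC less_imp_le[OF m_pos] s_out m_le s'_def]
    have s'_nonneg: "\<And>a. a \<in> C \<Longrightarrow> s' a \<ge> 0" using m_le by (auto simp: s'_def)
    have supp': "{a\<in>C. s' a > 0} \<subseteq> S - {a0}" using a0 by (auto simp: s'_def)
    have "card {a\<in>C. s' a > 0} \<le> card (S - {a0})" by (rule card_mono) (use finS supp' in auto)
    also have "\<dots> < card S" using a0 finS by (meson card_Diff1_less)
    finally have card_less: "card {a\<in>C. s' a > 0} < card {a\<in>C. s a > 0}" by (simp add: S_def)
    have "vol V E {a\<in>C. s' a > 0} \<le> vol V E S" using supp' SC C by (intro vol_mono) auto
    hence "vol V E {a\<in>C. s' a > 0} \<le> vol V E C / 2" using less.prems(2) by (simp add: S_def)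
    note IH = less.hyps[OF card_less s'_nonneg this]
    have "\<phi> * vol V E S \<le> real (cut_edges E S C)"
      using exp False SC less.prems(2) unfolding expands_def S_def by blast
    hence "m * (2 * (\<phi> * vol V E S)) \<le> m * (2 * real (cut_edges E S C))" using m_pos by simp
    have "2 * \<phi> * (\<Sum>a\<in>C. d a * s a) = 2 * \<phi> * (\<Sum>a\<in>C. d a * s' a) + m * (2 * (\<phi> * vol V E S))"
      using split(1) by (simp add: algebra_simps)
    also have "\<dots> \<le> (\<Sum>a\<in>C. \<Sum>b\<in>C. if E a b then \<bar>s' a - s' b\<bar> else 0) + m * (2 * real (cut_edges E S C))"
      using IH \<open>m * (2 * (\<phi> * vol V E S)) \<le> _\<close> by (rule add_mono)
    also have "\<dots> = (\<Sum>a\<in>C. \<Sum>b\<in>C. if E a b then \<bar>s a - s b\<bar> else 0)" using split(2) by simp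
    finally show ?thesis .
  qed
qed

lemma edge_sum_square_le_weighted:
  assumes "C \<subseteq> V"
  shows "(\<Sum>a\<in>C. \<Sum>b\<in>C. if E a b then (g a)\<^sup>2 else 0) \<le> (\<Sum>a\<in>C. d a * (g a)\<^sup>2)"
proof (rule sum_mono)
  fix a assume a: "a \<in> C"
  have "(\<Sum>b\<in>C. if E a b then 1 else 0) \<le> (\<Sum>b\<in>V. if E a b then 1 else (0::real))"
    by (rule sum_mono2[OF finite_V assms]) auto
  hence "(g a)\<^sup>2 * (\<Sum>b\<in>C. if E a b then 1 else 0) \<le> (g a)\<^sup>2 * d a"
    using edge_count[of a] a assms by (intro mult_left_mono) auto
  thus "(\<Sum>b\<in>C. if E a b then (g a)\<^sup>2 else 0) \<le> d a * (g a)\<^sup>2"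
    by (simp add: sum_distrib_left if_distrib mult.commute cong: if_cong)
qed

lemma edge_sum_square_sum_le:
  assumes C: "C \<subseteq> V"
  shows "(\<Sum>a\<in>C. \<Sum>b\<in>C. if E a b then (g a + g b)\<^sup>2 else 0) \<le> 4 * (\<Sum>a\<in>C. d a * (g a)\<^sup>2)"
proof -
  have "(g a + g b)\<^sup>2 \<le> 2 * (g a)\<^sup>2 + 2 * (g b)\<^sup>2" for a b
    using zero_le_power2[of "g a - g b"] unfolding power2_diff power2_sum by linarith
  hence "(\<Sum>a\<in>C. \<Sum>b\<in>C. if E a b then (g a + g b)\<^sup>2 else 0)
      \<le> (\<Sum>a\<in>C. \<Sum>b\<in>C. 2 * (if E a b then (g a)\<^sup>2 else 0) + 2 * (if E a b then (g b)\<^sup>2 else 0))"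
    by (intro sum_mono) auto
  also have "\<dots> = 2 * (\<Sum>a\<in>C. \<Sum>b\<in>C. if E a b then (g a)\<^sup>2 else 0) + 2 * (\<Sum>a\<in>C. \<Sum>b\<in>C. if E a b then (g b)\<^sup>2 else 0)"
    by (simp add: sum.distrib sum_distrib_left)
  also have "\<dots> \<le> 4 * (\<Sum>a\<in>C. d a * (g a)\<^sup>2)"
    using edge_sum_square_le_weighted[OF C, of g] edge_sum_swap[where C = C and f = "\<lambda>a b. (g a)\<^sup>2"]
    by linarith
  finally show ?thesis .
qed

text \<open>Cheeger's inequality for a nonnegative function whose support has at most half the
  volume: apply the coarea inequality to \<open>g\<^sup>2\<close> and bound
  \<open>\<Sum> |g a\<^sup>2 - g b\<^sup>2| = \<Sum> |g a - g b| |g a + g b|\<close> by Cauchy-Schwarz.\<close>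

lemma cheeger_small_support:
  assumes C: "C \<subseteq> V" and \<phi>: "\<phi> \<ge> 0" and exp: "expands \<phi> C"
    and g_nonneg: "\<And>a. a \<in> C \<Longrightarrow> g a \<ge> 0" and supp: "vol V E {a\<in>C. g a > 0} \<le> vol V E C / 2"
  shows "\<phi>\<^sup>2 * (\<Sum>a\<in>C. d a * (g a)\<^sup>2) \<le> dirichlet C g"
proof -
  define R where "R = (\<Sum>a\<in>C. d a * (g a)\<^sup>2)"
  define u where "u p = (if E (fst p) (snd p) then \<bar>g (fst p) - g (snd p)\<bar> else 0)" for p
  define w where "w p = (if E (fst p) (snd p) then \<bar>g (fst p) + g (snd p)\<bar> else 0)" for p
  have R_nonneg: "R \<ge> 0" unfolding R_def by (intro sum_nonneg) auto
  have "{a\<in>C. (g a)\<^sup>2 > 0} = {a\<in>C. g a > 0}" using g_nonneg by (force simp: less_le)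
  hence "2 * \<phi> * R \<le> (\<Sum>a\<in>C. \<Sum>b\<in>C. if E a b then \<bar>(g a)\<^sup>2 - (g b)\<^sup>2\<bar> else 0)"
    using coarea_inequality[OF C \<phi> exp, of "\<lambda>a. (g a)\<^sup>2"] supp unfolding R_def by auto
  also have "\<dots> = (\<Sum>p\<in>C \<times> C. u p * w p)"
    unfolding sum.cartesian_product
    by (intro sum.cong refl) (auto simp: u_def w_def abs_mult[symmetric] power2_eq_square algebra_simps)
  finally have coarea: "2 * \<phi> * R \<le> (\<Sum>p\<in>C \<times> C. u p * w p)" .
  have u_sq: "(\<Sum>p\<in>C \<times> C. (u p)\<^sup>2) = dirichlet C g"
    unfolding dirichlet_def sum.cartesian_product by (intro sum.cong refl) (auto simp: u_def)
  have "(\<Sum>p\<in>C \<times> C. (w p)\<^sup>2) = (\<Sum>a\<in>C. \<Sum>b\<in>C. if E a b then (g a + g b)\<^sup>2 else 0)"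
    unfolding sum.cartesian_product by (intro sum.cong refl) (auto simp: w_def)
  also have "\<dots> \<le> 4 * R" unfolding R_def by (rule edge_sum_square_sum_le[OF C])
  finally have w_sq: "(\<Sum>p\<in>C \<times> C. (w p)\<^sup>2) \<le> 4 * R" .
  have "(2 * \<phi> * R)\<^sup>2 \<le> (\<Sum>p\<in>C \<times> C. u p * w p)\<^sup>2"
    using coarea \<phi> R_nonneg by (intro power_mono) auto
  also have "\<dots> \<le> dirichlet C g * (\<Sum>p\<in>C \<times> C. (w p)\<^sup>2)"
    unfolding u_sq[symmetric] by (rule Cauchy_Schwarz_ineq_sum)
  also have "\<dots> \<le> dirichlet C g * (4 * R)" using w_sq dirichlet_nonneg by (intro mult_left_mono)
  finally have "R * (\<phi>\<^sup>2 * R) \<le> R * dirichlet C g" by (simp add: power_mult_distrib power2_eq_square algebra_simps)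
  thus ?thesis using R_nonneg unfolding R_def[symmetric]
    by (cases "R = 0") (simp_all add: dirichlet_nonneg mult_le_cancel_left_pos)
qed

lemma exists_volume_median:
  fixes y :: "'a \<Rightarrow> real"
  assumes C: "C \<subseteq> V" and "C \<noteq> {}"
  shows "\<exists>c. vol V E {a\<in>C. y a > c} \<le> vol V E C / 2 \<and> vol V E {a\<in>C. y a < c} \<le> vol V E C / 2"
proof -
  have fin: "finite C" using C finite_subset_V by blast
  define T where "T = {c \<in> y ` C. vol V E {a\<in>C. y a \<le> c} \<ge> vol V E C / 2}"
  have "Max (y ` C) \<in> T"
  proof -
    have "{a\<in>C. y a \<le> Max (y ` C)} = C" using fin by auto
    thus ?thesis unfolding T_def using fin assms(2) vol_nonneg[of C] by auto
  qed
  hence T_ne: "T \<noteq> {}" by auto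
  have finT: "finite T" unfolding T_def using fin by auto
  define c where "c = Min T"
  have cT: "c \<in> T" unfolding c_def using finT T_ne by (rule Min_in)
  have "vol V E {a\<in>C. y a > c} + vol V E {a\<in>C. \<not> y a > c} = vol V E C" by (rule vol_filter_split[OF fin])
  moreover have "{a\<in>C. \<not> y a > c} = {a\<in>C. y a \<le> c}" by auto
  ultimately have upper: "vol V E {a\<in>C. y a > c} \<le> vol V E C / 2" using cT unfolding T_def by auto
  have lower: "vol V E {a\<in>C. y a < c} \<le> vol V E C / 2"
  proof (rule ccontr)
    assume big: "\<not> ?thesis"
    define L where "L = {a\<in>C. y a < c}"
    have "L \<noteq> {}"
    proof
      assume "L = {}"
      hence "vol V E L = 0" by (simp add: vol_def)
      thus False using big vol_nonneg[of C] unfolding L_def by simp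
    qed
    moreover have finL: "finite L" unfolding L_def using fin by auto
    ultimately have c1L: "Max (y ` L) \<in> y ` L" by (intro Max_in) auto
    hence "Max (y ` L) < c" unfolding L_def by auto
    moreover have "L \<subseteq> {a\<in>C. y a \<le> Max (y ` L)}" using finL by (auto simp: L_def)
    hence "vol V E L \<le> vol V E {a\<in>C. y a \<le> Max (y ` L)}" using C by (intro vol_mono) auto
    hence "Max (y ` L) \<in> T" using big c1L unfolding T_def L_def by auto
    ultimately show False using finT unfolding c_def by (meson Min_le not_le)
  qed
  from upper lower show ?thesis by blast
qed

text \<open>A Poincar\'e inequality on an expanding cluster: split \<open>y - c\<close> at a volume median \<open>c\<close> into
  its positive and negative parts and apply Cheeger's inequality to each.\<close>

lemma cluster_poincare:
  assumes C: "C \<subseteq> V" and \<phi>: "\<phi> \<ge> 0" and exp: "expands \<phi> C"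
    and mean_zero: "(\<Sum>a\<in>C. d a * y a) = 0"
  shows "\<phi>\<^sup>2 * (\<Sum>a\<in>C. d a * (y a)\<^sup>2) \<le> dirichlet C y"
proof (cases "C = {}")
  case True thus ?thesis by (simp add: dirichlet_def)
next
  case False
  obtain c where c: "vol V E {a\<in>C. y a > c} \<le> vol V E C / 2" "vol V E {a\<in>C. y a < c} \<le> vol V E C / 2"
    using exists_volume_median[OF C False] by blast
  define pos where "pos a = max (y a - c) 0" for a
  define neg where "neg a = max (c - y a) 0" for a
  have "{a\<in>C. pos a > 0} = {a\<in>C. y a > c}" by (auto simp: pos_def)
  hence hp: "\<phi>\<^sup>2 * (\<Sum>a\<in>C. d a * (pos a)\<^sup>2) \<le> dirichlet C pos"
    using c(1) by (intro cheeger_small_support[OF C \<phi> exp]) (auto simp: pos_def)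
  have "{a\<in>C. neg a > 0} = {a\<in>C. y a < c}" by (auto simp: neg_def)
  hence hn: "\<phi>\<^sup>2 * (\<Sum>a\<in>C. d a * (neg a)\<^sup>2) \<le> dirichlet C neg"
    using c(2) by (intro cheeger_small_support[OF C \<phi> exp]) (auto simp: neg_def)
  from pos_neg_parts_sq_dist_le[of "y a - c" "y b - c" for a b]
  have "dirichlet C pos + dirichlet C neg \<le> dirichlet C y"
    unfolding dirichlet_def sum.distrib[symmetric] by (intro sum_mono) (auto simp: pos_def neg_def)
  have "(\<Sum>a\<in>C. d a * (y a)\<^sup>2) \<le> (\<Sum>a\<in>C. d a * (y a)\<^sup>2) + c\<^sup>2 * vol V E C"
    using vol_nonneg[of C] by simp
  also have "\<dots> = (\<Sum>a\<in>C. d a * (y a - c)\<^sup>2)"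
  proof -
    have "(\<Sum>a\<in>C. d a * (y a - c)\<^sup>2) = (\<Sum>a\<in>C. d a * (y a)\<^sup>2 - 2 * c * (d a * y a) + c\<^sup>2 * d a)"
      by (intro sum.cong refl) (simp add: power2_diff algebra_simps)
    also have "\<dots> = (\<Sum>a\<in>C. d a * (y a)\<^sup>2) - 2 * c * (\<Sum>a\<in>C. d a * y a) + c\<^sup>2 * vol V E C"
      by (simp add: sum.distrib sum_subtractf sum_distrib_left vol_def)
    finally show ?thesis using mean_zero by simp
  qed
  also have "\<dots> = (\<Sum>a\<in>C. d a * (pos a)\<^sup>2) + (\<Sum>a\<in>C. d a * (neg a)\<^sup>2)"
    unfolding sum.distrib[symmetric]
    by (intro sum.cong refl) (auto simp: pos_def neg_def max_def power2_eq_square algebra_simps)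
  finally have "\<phi>\<^sup>2 * (\<Sum>a\<in>C. d a * (y a)\<^sup>2)
      \<le> \<phi>\<^sup>2 * (\<Sum>a\<in>C. d a * (pos a)\<^sup>2) + \<phi>\<^sup>2 * (\<Sum>a\<in>C. d a * (neg a)\<^sup>2)"
    unfolding distrib_left[symmetric] by (rule mult_left_mono) simp_all
  with hp hn \<open>dirichlet C pos + dirichlet C neg \<le> dirichlet C y\<close> show ?thesis by linarith
qed

lemma cond_imp_expands:
  assumes C: "C \<subseteq> V" "C \<noteq> {}" and cond: "cond V E C \<ge> \<phi>"
  shows "expands \<phi> C"
  unfolding expands_def
proof (intro allI impI)
  fix S assume S: "S \<subseteq> C" "S \<noteq> {}" and small: "vol V E S \<le> vol V E C / 2"
  have fin: "finite C" using C finite_subset_V by blast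
  have vol_S: "vol V E S > 0" using S C by (intro vol_pos) auto
  show "\<phi> * vol V E S \<le> real (cut_edges E S C)"
  proof (cases "card C > 1")
    case True
    define Q where "Q = {cond_in V E C S | S. S \<subseteq> C \<and> 0 < vol V E S \<and> vol V E S \<le> vol V E C / 2}"
    have "Q \<subseteq> cond_in V E C ` Pow C" unfolding Q_def by auto
    hence "finite Q" using fin by (meson finite_Pow_iff finite_imageI finite_subset)
    moreover have "cond_in V E C S \<in> Q" unfolding Q_def using S vol_S small by auto
    hence "Min Q \<le> cond_in V E C S" using \<open>finite Q\<close> by simp
    moreover have "\<phi> \<le> Min Q" using cond True by (simp add: cond_def Q_def)
    ultimately have "\<phi> \<le> cond_in V E C S" by linarith
    thus ?thesis using vol_S by (simp add: cond_in_def pos_le_divide_eq)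
  next
    case False
    \<comment> \<open>A singleton cluster has no subset of at most half its (positive) volume.\<close>
    hence "card C = 1" using C fin by (simp add: Suc_leI card_gt_0_iff le_antisym)
    then obtain a where "C = {a}" by (auto simp: card_Suc_eq)
    hence "S = C" using S by auto
    thus ?thesis using small vol_pos[OF C] by simp
  qed
qed

definition sqrt_deg_on :: "'a set \<Rightarrow> 'a \<Rightarrow> real" where
  "sqrt_deg_on C = (\<lambda>a. if a \<in> C then sd a else 0)"

text \<open>Orthogonality to \<open>D\<^sup>1\<^sup>/\<^sup>2 \<one>\<^sub>C\<close> means that \<open>D\<^sup>-\<^sup>1\<^sup>/\<^sup>2 x\<close> has weighted mean zero on \<open>C\<close>, so the
  Poincar\'e inequality applies on every cluster; dropping the edges between clusters only
  decreases the energy.\<close>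

lemma qform_le_orthogonal_to_clusters:
  assumes P: "finite P" "\<forall>C\<in>P. \<forall>C'\<in>P. C \<noteq> C' \<longrightarrow> C \<inter> C' = {}" "\<Union>P = V"
    and \<phi>: "\<phi> \<ge> 0" and exp: "\<forall>C\<in>P. expands \<phi> C"
    and orth: "\<forall>C\<in>P. inner_V x (sqrt_deg_on C) = 0"
  shows "qform x \<le> (1 - \<phi>\<^sup>2 / 4) * norm_sq x"
proof -
  define y where "y a = x a / sd a" for a
  have CV: "\<And>C. C \<in> P \<Longrightarrow> C \<subseteq> V" using P(3) by auto
  have fin: "\<And>C. C \<in> P \<Longrightarrow> finite C" using CV finite_subset_V by blast
  have cluster: "\<phi>\<^sup>2 * (\<Sum>a\<in>C. (x a)\<^sup>2) \<le> dirichlet C y" if C: "C \<in> P" for C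
  proof -
    have dy: "d a * y a = sd a * x a" "d a * (y a)\<^sup>2 = (x a)\<^sup>2" if "a \<in> C" for a
    proof -
      have a: "a \<in> V" using CV[OF C] that by auto
      show "d a * y a = sd a * x a" "d a * (y a)\<^sup>2 = (x a)\<^sup>2"
        using sd_pos[OF a] unfolding y_def sd_sq[OF a, symmetric] by (auto simp: field_simps power2_eq_square)
    qed
    have "inner_V x (sqrt_deg_on C) = (\<Sum>a\<in>V. if a \<in> C then sd a * x a else 0)"
      unfolding inner_V_def sqrt_deg_on_def by (intro sum.cong refl) auto
    also have "\<dots> = (\<Sum>a\<in>C. d a * y a)"
      using CV[OF C] finite_V dy(1) by (simp add: sum.inter_restrict[symmetric] Int_absorb1)
    finally have "(\<Sum>a\<in>C. d a * y a) = 0" using orth C by simp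
    from cluster_poincare[OF CV[OF C] \<phi> _ this] exp C dy(2)
    show ?thesis by simp
  qed
  have sum_P: "(\<Sum>a\<in>V. f a) = (\<Sum>C\<in>P. \<Sum>a\<in>C. f a)" for f :: "'a \<Rightarrow> real"
    using sum.Union_disjoint[of P f] fin P(2,3) by simp
  have "norm_sq x = (\<Sum>C\<in>P. \<Sum>a\<in>C. (x a)\<^sup>2)"
    unfolding norm_sq_def inner_V_def sum_P by (simp add: power2_eq_square)
  hence "\<phi>\<^sup>2 * norm_sq x = (\<Sum>C\<in>P. \<phi>\<^sup>2 * (\<Sum>a\<in>C. (x a)\<^sup>2))" by (simp add: sum_distrib_left)
  also have "\<dots> \<le> (\<Sum>C\<in>P. dirichlet C y)" by (intro sum_mono cluster)
  also have "\<dots> \<le> (\<Sum>C\<in>P. \<Sum>a\<in>C. \<Sum>b\<in>V. if E a b then (y a - y b)\<^sup>2 else 0)"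
    unfolding dirichlet_def by (intro sum_mono sum_mono2 finite_V) (auto dest: CV)
  also have "\<dots> = energy x"
    unfolding energy_def y_def by (rule sum_P[symmetric])
  finally show ?thesis unfolding qform_eq_energy by (simp add: algebra_simps)
qed

section \<open>Eigenvectors above a threshold\<close>

definition orthonormal :: "nat \<Rightarrow> (nat \<Rightarrow> 'a \<Rightarrow> real) \<Rightarrow> bool" where
  "orthonormal m vs \<longleftrightarrow> (\<forall>i<m. \<forall>j<m. inner_V (vs i) (vs j) = (if i = j then 1 else 0))"

definition orth_compl :: "nat \<Rightarrow> (nat \<Rightarrow> 'a \<Rightarrow> real) \<Rightarrow> ('a \<Rightarrow> real) \<Rightarrow> bool" where
  "orth_compl m vs x \<longleftrightarrow> supported x \<and> (\<forall>j<m. inner_V x (vs j) = 0)"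

lemma qform_eq_kernel_sum: "qform x = (\<Sum>v\<in>V. \<Sum>w\<in>V. x v * walk_kernel v w * x w)"
  unfolding qform_def inner_V_def sym_walk_def by (simp add: sum_distrib_left mult.assoc)

lemma orth_compl_normalize:
  assumes "orth_compl m vs x" "norm_sq x > 0"
  defines "y \<equiv> \<lambda>a. (1 / sqrt (norm_sq x)) * x a"
  shows "orth_compl m vs y" "norm_sq y = 1" "qform y = qform x / norm_sq x"
proof -
  have c: "(1 / sqrt (norm_sq x))\<^sup>2 = 1 / norm_sq x" using assms(2) by (simp add: power_divide)
  show "orth_compl m vs y"
    using assms(1) unfolding y_def orth_compl_def supported_def inner_V_scale by simp
  show "norm_sq y = 1" unfolding y_def norm_sq_scale c using assms(2) by simp
  show "qform y = qform x / norm_sq x" unfolding y_def qform_scale c by simp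
qed

lemma continuous_map_qform: "continuous_map (product_topology (\<lambda>_. euclideanreal) V) euclideanreal qform"
  unfolding qform_eq_kernel_sum by (intro continuous_intros continuous_map_product_projection finite_V) auto

lemma compactin_unit_orth_compl:
  fixes m :: nat and vs :: "nat \<Rightarrow> 'a \<Rightarrow> real"
  defines "X \<equiv> product_topology (\<lambda>_. euclideanreal) V"
  shows "compactin X {x \<in> topspace X. norm_sq x = 1 \<and> (\<forall>j<m. inner_V x (vs j) = 0)}"
    (is "compactin X ?K")
proof -
  define H where "H x = (norm_sq x - 1)\<^sup>2 + (\<Sum>j<m. (inner_V x (vs j))\<^sup>2)" for x
  have "(\<Sum>j<m. (inner_V x (vs j))\<^sup>2) = 0 \<longleftrightarrow> (\<forall>j<m. inner_V x (vs j) = 0)" for x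
    by (subst sum_nonneg_eq_0_iff) auto
  hence "H x = 0 \<longleftrightarrow> norm_sq x = 1 \<and> (\<forall>j<m. inner_V x (vs j) = 0)" for x
    unfolding H_def by (subst add_nonneg_eq_0_iff) (auto intro: sum_nonneg)
  hence H_0: "?K = {x \<in> topspace X. H x \<in> {0}}" by auto
  have "continuous_map X euclideanreal H"
    unfolding H_def norm_sq_def inner_V_def X_def
    by (intro continuous_intros continuous_map_product_projection finite_V) auto
  hence closed: "closedin X ?K" unfolding H_0 by (rule closedin_continuous_map_preimage) simp
  have "?K \<subseteq> PiE V (\<lambda>_. {-1..1})"
  proof
    fix x assume x: "x \<in> ?K"
    have "\<bar>x v\<bar> \<le> 1" if "v \<in> V" for v
    proof -
      have "(x v)\<^sup>2 \<le> norm_sq x"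
        unfolding norm_sq_def inner_V_def power2_eq_square using that finite_V by (intro member_le_sum) auto
      thus ?thesis using x abs_le_square_iff[of "x v" 1] by simp
    qed
    thus "x \<in> PiE V (\<lambda>_. {-1..1})" using x by (auto simp: X_def PiE_def extensional_def abs_le_iff)
  qed
  moreover have "compactin X (PiE V (\<lambda>_. {-1..1::real}))" unfolding X_def by (subst compactin_PiE) auto
  ultimately show ?thesis using closed closed_compactin by blast
qed

lemma qform_attains_max_on_unit_orth_compl:
  assumes "orth_compl m vs x0" "norm_sq x0 > 0"
  shows "\<exists>v. orth_compl m vs v \<and> norm_sq v = 1 \<and>
    (\<forall>x. orth_compl m vs x \<and> norm_sq x = 1 \<longrightarrow> qform x \<le> qform v)"
proof -
  define X where "X = product_topology (\<lambda>_. euclideanreal) V"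
  define K where "K = {x \<in> topspace X. norm_sq x = 1 \<and> (\<forall>j<m. inner_V x (vs j) = 0)}"
  have "compact (qform ` K)"
    using image_compactin[OF compactin_unit_orth_compl continuous_map_qform] unfolding K_def X_def by simp
  moreover have restrict_K: "restrict x V \<in> K" if "orth_compl m vs x" "norm_sq x = 1" for x
  proof -
    have "norm_sq (restrict x V) = norm_sq x" "inner_V (restrict x V) (vs j) = inner_V x (vs j)" for j
      unfolding norm_sq_def by (auto intro: inner_V_cong)
    thus ?thesis using that unfolding K_def X_def orth_compl_def by auto
  qed
  hence "qform ` K \<noteq> {}" using orth_compl_normalize[OF assms] by blast
  ultimately obtain q where "q \<in> qform ` K" "\<forall>z\<in>qform ` K. z \<le> q" by (meson compact_attains_sup)
  then obtain v0 where v0: "v0 \<in> K" "\<forall>y\<in>K. qform y \<le> qform v0" by auto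
  \<comment> \<open>Points of the product space are undefined off \<open>V\<close>; zero them there.\<close>
  define v where "v a = (if a \<in> V then v0 a else 0)" for a
  have same: "qform v = qform v0" "norm_sq v = norm_sq v0" "inner_V v y = inner_V v0 y" for y
    unfolding norm_sq_def by (auto simp: v_def intro: qform_cong inner_V_cong)
  have "orth_compl m vs v" "norm_sq v = 1"
    using v0(1) unfolding K_def orth_compl_def supported_def same by (auto simp: v_def)
  moreover have "qform x \<le> qform v" if "orth_compl m vs x" "norm_sq x = 1" for x
    using v0(2) restrict_K[OF that] same qform_cong[of x "restrict x V"] by simp
  ultimately show ?thesis by blast
qed

lemma qform_le_max_on_orth_compl:
  assumes "orth_compl m vs x0" "norm_sq x0 > 0"
  shows "\<exists>v. orth_compl m vs v \<and> norm_sq v = 1 \<and>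
    (\<forall>x. orth_compl m vs x \<longrightarrow> qform x \<le> qform v * norm_sq x)"
proof -
  obtain v where v: "orth_compl m vs v" "norm_sq v = 1"
    and max: "\<And>x. orth_compl m vs x \<Longrightarrow> norm_sq x = 1 \<Longrightarrow> qform x \<le> qform v"
    using qform_attains_max_on_unit_orth_compl[OF assms] by blast
  have "qform x \<le> qform v * norm_sq x" if x: "orth_compl m vs x" for x
  proof (cases "norm_sq x = 0")
    case True
    thus ?thesis using qform_le_norm_sq[of x] by simp
  next
    case False
    hence pos: "norm_sq x > 0" using norm_sq_nonneg[of x] by simp
    have "qform x / norm_sq x \<le> qform v"
      using max[OF orth_compl_normalize(1,2)[OF x pos]] unfolding orth_compl_normalize(3)[OF x pos] .
    thus ?thesis using pos by (simp add: divide_le_eq)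
  qed
  with v show ?thesis by blast
qed

definition eigen_family :: "real \<Rightarrow> nat \<Rightarrow> (nat \<Rightarrow> 'a \<Rightarrow> real) \<Rightarrow> (nat \<Rightarrow> real) \<Rightarrow> bool" where
  "eigen_family r m vs lam \<longleftrightarrow> orthonormal m vs \<and>
     (\<forall>j<m. supported (vs j) \<and> sym_walk (vs j) = (\<lambda>a. lam j * vs j a) \<and> lam j > r)"

definition rayleigh_bounded :: "real \<Rightarrow> nat \<Rightarrow> (nat \<Rightarrow> 'a \<Rightarrow> real) \<Rightarrow> bool" where
  "rayleigh_bounded r m vs \<longleftrightarrow> (\<forall>x. orth_compl m vs x \<longrightarrow> qform x \<le> r * norm_sq x)"

lemma orth_compl_sym_walk:
  assumes "\<forall>j<m. sym_walk (vs j) = (\<lambda>a. lam j * vs j a)" and "orth_compl m vs x"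
  shows "orth_compl m vs (sym_walk x)"
  unfolding orth_compl_def
proof (intro conjI allI impI supported_sym_walk)
  fix j assume j: "j < m"
  have "inner_V (sym_walk x) (vs j) = inner_V x (sym_walk (vs j))" by (rule sym_walk_self_adjoint)
  also have "\<dots> = lam j * inner_V (vs j) x"
    using assms(1) j by (simp add: inner_V_commute[of x] inner_V_scale)
  also have "\<dots> = 0" using assms(2) j by (simp add: orth_compl_def inner_V_commute)
  finally show "inner_V (sym_walk x) (vs j) = 0" .
qed

text \<open>The first-order condition for the maximum of the Rayleigh quotient: by the
  discriminant criterion, the maximizer \<open>v\<close> satisfies \<open>\<langle>\<lambda> v - N v, y\<rangle> = 0\<close> for all \<open>y\<close> in the
  complement, in particular for \<open>y = \<lambda> v - N v\<close> itself.\<close>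

lemma max_rayleigh_is_eigenvector:
  assumes eig: "\<forall>j<m. sym_walk (vs j) = (\<lambda>a. lam j * vs j a)"
    and v: "orth_compl m vs v" "norm_sq v = 1"
    and max: "\<forall>x. orth_compl m vs x \<longrightarrow> qform x \<le> qform v * norm_sq x"
  shows "sym_walk v = (\<lambda>a. qform v * v a)"
proof -
  define l where "l = qform v"
  have stationary: "l * inner_V v y - inner_V v (sym_walk y) = 0" if y: "orth_compl m vs y" for y
  proof -
    have "(l * inner_V v y - inner_V v (sym_walk y))\<^sup>2 \<le> (l * norm_sq v - qform v) * (l * norm_sq y - qform y)"
    proof (rule quadratic_nonneg_discriminant)
      fix t :: real
      have comb: "orth_compl m vs (\<lambda>a. v a + t * y a)"
        using v(1) y inner_V_add_scale[of 1 v t y] by (auto simp: orth_compl_def supported_def)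
      have "qform (\<lambda>a. v a + t * y a) \<le> l * norm_sq (\<lambda>a. v a + t * y a)"
        using max[rule_format, OF comb] by (simp add: l_def)
      thus "0 \<le> (l * norm_sq v - qform v) + 2 * (l * inner_V v y - inner_V v (sym_walk y)) * t
                + (l * norm_sq y - qform y) * t\<^sup>2"
        unfolding qform_add_scale norm_sq_add_scale by (simp add: algebra_simps)
    next
      show "0 \<le> l * norm_sq y - qform y" using max[rule_format, OF y] by (simp add: l_def)
    qed
    also have "l * norm_sq v - qform v = 0" using v(2) l_def by simp
    finally show ?thesis by simp
  qed
  define w where "w a = l * v a + (-1) * sym_walk v a" for a
  have inner_w: "inner_V w y = l * inner_V v y - inner_V v (sym_walk y)" for y
    unfolding w_def inner_V_add_scale sym_walk_self_adjoint by simp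
  have "orth_compl m vs w"
    using v(1) orth_compl_sym_walk[OF eig v(1)]
    unfolding orth_compl_def supported_def w_def inner_V_add_scale by simp
  hence "norm_sq w = 0" unfolding norm_sq_def inner_w by (rule stationary)
  hence w_0: "w a = 0" if "a \<in> V" for a using norm_sq_eq_0D that by blast
  show ?thesis
  proof
    fix a show "sym_walk v a = qform v * v a"
    proof (cases "a \<in> V")
      case True
      have "l * v a - sym_walk v a = 0" using w_0[OF True] unfolding w_def by simp
      thus ?thesis unfolding l_def by linarith
    next
      case False
      thus ?thesis using v(1) supported_sym_walk unfolding orth_compl_def supported_def by simp
    qed
  qed
qed

lemma orthonormal_extend:
  assumes "orthonormal m vs" "orth_compl m vs v" "norm_sq v = 1"
  shows "orthonormal (Suc m) (vs(m := v))"
  unfolding orthonormal_def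
proof (intro allI impI)
  fix i j assume i: "i < Suc m" and j: "j < Suc m"
  show "inner_V ((vs(m := v)) i) ((vs(m := v)) j) = (if i = j then 1 else 0)"
  proof (cases "i = m"; cases "j = m")
    assume "i = m" "j = m" thus ?thesis using assms(3) by (simp add: norm_sq_def)
  next
    assume "i = m" "j \<noteq> m" thus ?thesis using assms(2) j by (simp add: orth_compl_def)
  next
    assume "i \<noteq> m" "j = m" thus ?thesis using assms(2) i inner_V_commute by (simp add: orth_compl_def)
  next
    assume "i \<noteq> m" "j \<noteq> m" thus ?thesis using assms(1) i j unfolding orthonormal_def by simp
  qed
qed

lemma eigen_family_extend:
  assumes fam: "eigen_family r m vs lam" and unbounded: "\<not> rayleigh_bounded r m vs"
  shows "\<exists>vs' lam'. eigen_family r (Suc m) vs' lam'"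
proof -
  obtain x0 where x0: "orth_compl m vs x0" "qform x0 > r * norm_sq x0"
    using unbounded unfolding rayleigh_bounded_def by force
  have pos: "norm_sq x0 > 0"
    using x0(2) qform_le_norm_sq[of x0] norm_sq_nonneg[of x0] by (cases "norm_sq x0 = 0") auto
  obtain v where v: "orth_compl m vs v" "norm_sq v = 1"
    and max: "\<forall>x. orth_compl m vs x \<longrightarrow> qform x \<le> qform v * norm_sq x"
    using qform_le_max_on_orth_compl[OF x0(1) pos] by blast
  have eig: "\<forall>j<m. sym_walk (vs j) = (\<lambda>a. lam j * vs j a)" using fam unfolding eigen_family_def by blast
  have "r * norm_sq x0 < qform v * norm_sq x0" using x0 max by fastforce
  hence gt: "qform v > r" using pos by (simp add: mult_less_cancel_right)
  define vs' where "vs' = vs(m := v)"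
  define lam' where "lam' = lam(m := qform v)"
  have ev: "sym_walk v = (\<lambda>a. qform v * v a)" by (rule max_rayleigh_is_eigenvector[OF eig v max])
  have "eigen_family r (Suc m) vs' lam'"
    unfolding eigen_family_def
  proof (intro conjI allI impI)
    show "orthonormal (Suc m) vs'"
      using orthonormal_extend[OF _ v] fam unfolding eigen_family_def vs'_def by blast
    fix j assume j: "j < Suc m"
    show "supported (vs' j)" "sym_walk (vs' j) = (\<lambda>a. lam' j * vs' j a)" "lam' j > r"
      using fam j v(1) ev gt unfolding eigen_family_def orth_compl_def vs'_def lam'_def
      by (auto simp: less_Suc_eq)
  qed
  thus ?thesis by blast
qed

lemma eigen_family_grows:
  "(\<exists>vs lam. eigen_family r n vs lam) \<or> (\<exists>m<n. \<exists>vs lam. eigen_family r m vs lam \<and> rayleigh_bounded r m vs)"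
proof (induction n)
  case 0
  have "eigen_family r 0 (\<lambda>_ _. 0) (\<lambda>_. 0)" by (simp add: eigen_family_def orthonormal_def)
  thus ?case by blast
next
  case (Suc n)
  thus ?case using eigen_family_extend less_SucI by blast
qed

lemma inner_V_orthonormal:
  assumes "orthonormal m vs"
  shows "inner_V (\<lambda>x. \<Sum>j<m. a j * vs j x) (\<lambda>x. \<Sum>j<m. b j * vs j x) = (\<Sum>j<m. a j * b j)"
proof -
  have "inner_V (vs i) (\<lambda>x. \<Sum>j<m. b j * vs j x) = b i" if "i < m" for i
  proof -
    have "inner_V (vs i) (\<lambda>x. \<Sum>j<m. b j * vs j x) = (\<Sum>j<m. b j * (if i = j then 1 else 0))"
      unfolding inner_V_sum_right using assms that unfolding orthonormal_def by (intro sum.cong refl) auto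
    also have "\<dots> = b i" using that by (simp add: if_distrib[of "\<lambda>t. b _ * t"] cong: if_cong)
    finally show ?thesis .
  qed
  thus ?thesis unfolding inner_V_sum_left by simp
qed

text \<open>If an eigen-family had more than \<open>card W\<close> members, a nonzero combination of them would be
  orthogonal to \<open>W\<close>, yet its Rayleigh quotient would exceed \<open>r\<close>.\<close>

lemma eigen_family_card_le:
  assumes fam: "eigen_family r m vs lam" and W: "finite W"
    and bound: "\<And>x. supported x \<Longrightarrow> (\<forall>w\<in>W. inner_V x w = 0) \<Longrightarrow> qform x \<le> r * norm_sq x"
  shows "m \<le> card W"
proof (rule ccontr)
  assume "\<not> m \<le> card W"
  define F where "F = (\<lambda>w j. inner_V (vs j) w) ` W"
  have "card F \<le> card W" unfolding F_def by (rule card_image_le[OF W])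
  hence "card F < card {..<m}" using \<open>\<not> m \<le> card W\<close> by simp
  then obtain c where c: "\<exists>j\<in>{..<m}. c j \<noteq> 0" "\<forall>a\<in>F. (\<Sum>j<m. a j * c j) = 0"
    using homogeneous_system_nontrivial_solution[of "{..<m}" F] W unfolding F_def by auto
  define x where "x a = (\<Sum>j<m. c j * vs j a)" for a
  have "supported x" using fam unfolding x_def eigen_family_def supported_def by auto
  moreover have "\<forall>w\<in>W. inner_V x w = 0"
    using c(2) unfolding x_def inner_V_sum_left F_def by (auto simp: mult.commute)
  ultimately have le: "qform x \<le> r * norm_sq x" by (rule bound)
  have orth: "orthonormal m vs" using fam unfolding eigen_family_def by blast
  have "sym_walk x = (\<lambda>a. \<Sum>j<m. (c j * lam j) * vs j a)"
    unfolding x_def sym_walk_sum using fam unfolding eigen_family_def by (auto intro!: sum.cong)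
  hence "qform x = (\<Sum>j<m. c j * (c j * lam j))" unfolding qform_def x_def by (simp add: inner_V_orthonormal[OF orth])
  moreover have "norm_sq x = (\<Sum>j<m. c j * c j)" unfolding norm_sq_def x_def by (rule inner_V_orthonormal[OF orth])
  ultimately have "(\<Sum>j<m. (lam j - r) * (c j)\<^sup>2) \<le> 0"
    using le by (simp add: sum_distrib_left sum_subtractf algebra_simps power2_eq_square)
  moreover obtain j0 where j0: "j0 < m" "c j0 \<noteq> 0" using c(1) by auto
  have "0 < (\<Sum>j<m. (lam j - r) * (c j)\<^sup>2)"
    using fam j0 unfolding eigen_family_def by (intro sum_pos2[of _ j0]) (auto simp: less_imp_le)
  ultimately show False by simp
qed

lemma exists_rayleigh_bounded_eigen_family:
  assumes W: "finite W"
    and bound: "\<And>x. supported x \<Longrightarrow> (\<forall>w\<in>W. inner_V x w = 0) \<Longrightarrow> qform x \<le> r * norm_sq x"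
  shows "\<exists>m vs lam. m \<le> card W \<and> eigen_family r m vs lam \<and> rayleigh_bounded r m vs"
  using eigen_family_grows[of r "Suc (card W)"] eigen_family_card_le[OF _ W bound]
  by (fastforce simp: less_Suc_eq_le)

section \<open>Powers of the walk\<close>

lemma sym_walk_power_add_scale:
  "(sym_walk ^^ t) (\<lambda>a. x a + c * y a) = (\<lambda>a. (sym_walk ^^ t) x a + c * (sym_walk ^^ t) y a)"
proof (induction t)
  case (Suc t)
  have "sym_walk (\<lambda>a. (sym_walk ^^ t) x a + c * (sym_walk ^^ t) y a)
      = (\<lambda>a. sym_walk ((sym_walk ^^ t) x) a + c * sym_walk ((sym_walk ^^ t) y) a)"
    using sym_walk_add_scale[of 1 "(sym_walk ^^ t) x" c "(sym_walk ^^ t) y"] by simp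
  thus ?case using Suc by simp
qed simp

lemma sym_walk_power_scale: "(sym_walk ^^ t) (\<lambda>a. c * x a) = (\<lambda>a. c * (sym_walk ^^ t) x a)"
  by (induction t) (simp_all add: sym_walk_scale)

lemma sym_walk_power_eigen:
  assumes "eigen_family r m vs lam"
  shows "(sym_walk ^^ t) (\<lambda>a. \<Sum>j<m. c j * vs j a) = (\<lambda>a. \<Sum>j<m. (c j * lam j ^ t) * vs j a)"
proof (induction t)
  case (Suc t)
  have "(sym_walk ^^ Suc t) (\<lambda>a. \<Sum>j<m. c j * vs j a) = (\<lambda>a. \<Sum>j<m. (c j * lam j ^ t) * sym_walk (vs j) a)"
    using Suc by (simp add: sym_walk_sum)
  also have "\<dots> = (\<lambda>a. \<Sum>j<m. (c j * lam j ^ Suc t) * vs j a)"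
    using assms unfolding eigen_family_def by (auto intro!: sum.cong)
  finally show ?case .
qed simp

lemma qform_cauchy_schwarz: "(inner_V x (sym_walk y))\<^sup>2 \<le> qform x * qform y"
proof (rule quadratic_nonneg_discriminant)
  fix t :: real
  show "0 \<le> qform x + 2 * inner_V x (sym_walk y) * t + qform y * t\<^sup>2"
    using qform_nonneg[of "\<lambda>a. x a + t * y a"] unfolding qform_add_scale by (simp add: algebra_simps)
qed (rule qform_nonneg)

text \<open>On the complement of the eigen-family \<open>N\<close> is positive semidefinite with Rayleigh quotient
  at most \<open>r\<close>, so \<open>\<parallel>N x\<parallel>\<^sup>2 = \<langle>x, N (N x)\<rangle> \<le> \<surd>(Q x Q (N x)) \<le> r \<parallel>x\<parallel> \<parallel>N x\<parallel>\<close>.\<close>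

lemma sym_walk_contracts:
  assumes fam: "eigen_family r m vs lam" and bounded: "rayleigh_bounded r m vs" and "r \<ge> 0"
    and x: "orth_compl m vs x"
  shows "orth_compl m vs (sym_walk x) \<and> norm_sq (sym_walk x) \<le> r\<^sup>2 * norm_sq x"
proof
  define y where "y = sym_walk x"
  show y: "orth_compl m vs (sym_walk x)"
    using orth_compl_sym_walk[OF _ x] fam unfolding eigen_family_def by blast
  have "(norm_sq y)\<^sup>2 \<le> qform x * qform y"
    using qform_cauchy_schwarz[of x y] sym_walk_self_adjoint[of x "sym_walk x"]
    unfolding y_def norm_sq_def by simp
  also have "\<dots> \<le> (r * norm_sq x) * (r * norm_sq y)"
    using bounded x y qform_nonneg \<open>r \<ge> 0\<close> norm_sq_nonneg[of x]
    unfolding rayleigh_bounded_def y_def by (intro mult_mono) auto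
  finally have "norm_sq y * norm_sq y \<le> norm_sq y * (r\<^sup>2 * norm_sq x)"
    by (simp add: power2_eq_square algebra_simps)
  thus "norm_sq (sym_walk x) \<le> r\<^sup>2 * norm_sq x"
    using norm_sq_nonneg[of y] norm_sq_nonneg[of x] unfolding y_def[symmetric]
    by (cases "norm_sq y = 0") (simp_all add: mult_le_cancel_left_pos)
qed

lemma sym_walk_power_contracts:
  assumes "eigen_family r m vs lam" "rayleigh_bounded r m vs" "r \<ge> 0" "orth_compl m vs x"
  shows "orth_compl m vs ((sym_walk ^^ t) x) \<and> norm_sq ((sym_walk ^^ t) x) \<le> (r\<^sup>2) ^ t * norm_sq x"
proof (induction t)
  case (Suc t)
  have "r\<^sup>2 * norm_sq ((sym_walk ^^ t) x) \<le> r\<^sup>2 * ((r\<^sup>2) ^ t * norm_sq x)"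
    using Suc by (intro mult_left_mono) auto
  moreover have "orth_compl m vs ((sym_walk ^^ Suc t) x)
      \<and> norm_sq ((sym_walk ^^ Suc t) x) \<le> r\<^sup>2 * norm_sq ((sym_walk ^^ t) x)"
    using sym_walk_contracts[OF assms(1-3)] Suc by simp
  ultimately show ?case by simp
qed (use assms in simp)

lemma eigen_family_eigenvalue_le_1:
  assumes "eigen_family r m vs lam" "j < m"
  shows "lam j \<le> 1"
proof -
  have "inner_V (vs j) (vs j) = (if j = j then 1 else 0)" and eig: "sym_walk (vs j) = (\<lambda>a. lam j * vs j a)"
    using assms unfolding eigen_family_def orthonormal_def by blast+
  hence unit: "inner_V (vs j) (vs j) = 1" by simp
  have "lam j = qform (vs j)"
    unfolding qform_def eig inner_V_commute[of "vs j" "\<lambda>a. lam j * vs j a"] inner_V_scale unit by simp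
  also have "\<dots> \<le> 1" using qform_le_norm_sq[of "vs j"] unit unfolding norm_sq_def by simp
  finally show ?thesis .
qed

lemma inner_V_span_orth_compl:
  "orth_compl m vs z \<Longrightarrow> inner_V (\<lambda>a. \<Sum>j<m. b j * vs j a) z = 0"
  unfolding inner_V_sum_left orth_compl_def by (simp add: inner_V_commute)

lemma indicator_minus_projection:
  assumes fam: "eigen_family r m vs lam" and u: "u \<in> V"
  defines "q \<equiv> \<lambda>a. indicator_vec u a + (-1) * (\<Sum>j<m. vs j u * vs j a)"
  shows "orth_compl m vs q" "norm_sq q \<le> 1"
proof -
  define p where "p = (\<lambda>a. \<Sum>j<m. vs j u * vs j a)"
  have orth: "orthonormal m vs" using fam unfolding eigen_family_def by blast
  have inner_p: "inner_V p (vs i) = vs i u" if "i < m" for i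
  proof -
    have "inner_V p (vs i) = (\<Sum>j<m. vs j u * (if j = i then 1 else 0))"
      unfolding p_def inner_V_sum_left using orth that unfolding orthonormal_def by (intro sum.cong refl) auto
    also have "\<dots> = vs i u" using that by (simp add: if_distrib[of "\<lambda>t. _ * t"] cong: if_cong)
    finally show ?thesis .
  qed
  show q: "orth_compl m vs q"
    unfolding orth_compl_def
  proof (intro conjI allI impI)
    show "supported q"
      using fam u unfolding supported_def q_def eigen_family_def indicator_vec_def by auto
    fix i assume "i < m"
    thus "inner_V q (vs i) = 0"
      using inner_V_add_scale[of 1 "indicator_vec u" "-1" p "vs i"] inner_p inner_V_indicator[OF u]
      unfolding q_def p_def by simp
  qed
  have "1 = norm_sq (indicator_vec u)"
    using inner_V_indicator[OF u, of "indicator_vec u"] by (simp add: norm_sq_def indicator_vec_def)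
  also have "indicator_vec u = (\<lambda>a. p a + 1 * q a)" unfolding q_def p_def by simp
  also have "norm_sq \<dots> = norm_sq p + norm_sq q"
    unfolding norm_sq_add_scale using inner_V_span_orth_compl[OF q, of "\<lambda>j. vs j u"] by (simp add: p_def)
  finally show "norm_sq q \<le> 1" using norm_sq_nonneg[of p] by simp
qed

text \<open>Split \<open>\<one>\<^sub>u\<close> into its projection \<open>\<Sum>\<^sub>j v\<^sub>j(u) v\<^sub>j\<close> onto the eigen-family, on which \<open>N\<close> does not
  expand, and the orthogonal rest, which \<open>N\<close> contracts by the factor \<open>r\<close>.\<close>

lemma norm_sq_sym_walk_power_indicator:
  assumes fam: "eigen_family r m vs lam" and bounded: "rayleigh_bounded r m vs" and r: "r \<ge> 0"
    and u: "u \<in> V"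
  shows "norm_sq ((sym_walk ^^ t) (indicator_vec u)) \<le> (\<Sum>j<m. (vs j u)\<^sup>2) + (r\<^sup>2) ^ t"
proof -
  have orth: "orthonormal m vs" using fam unfolding eigen_family_def by blast
  define q where "q = (\<lambda>a. indicator_vec u a + (-1) * (\<Sum>j<m. vs j u * vs j a))"
  note q = indicator_minus_projection[OF fam u, folded q_def]
  define A where "A = (\<lambda>a. \<Sum>j<m. (vs j u * lam j ^ t) * vs j a)"
  define B where "B = (sym_walk ^^ t) q"
  have B: "orth_compl m vs B" "norm_sq B \<le> (r\<^sup>2) ^ t * norm_sq q"
    using sym_walk_power_contracts[OF fam bounded r q(1)] unfolding B_def by auto
  have split: "indicator_vec u = (\<lambda>a. (\<Sum>j<m. vs j u * vs j a) + 1 * q a)" unfolding q_def by simp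
  have walk_split: "(sym_walk ^^ t) (indicator_vec u) = (\<lambda>a. A a + 1 * B a)"
    unfolding split sym_walk_power_add_scale sym_walk_power_eigen[OF fam] A_def B_def ..
  have "norm_sq ((sym_walk ^^ t) (indicator_vec u)) = norm_sq A + norm_sq B"
    unfolding walk_split norm_sq_add_scale using inner_V_span_orth_compl[OF B(1), of "\<lambda>j. vs j u * lam j ^ t"]
    by (simp add: A_def)
  also have "norm_sq A \<le> (\<Sum>j<m. (vs j u)\<^sup>2)"
    unfolding norm_sq_def A_def inner_V_orthonormal[OF orth]
  proof (rule sum_mono)
    fix j assume "j \<in> {..<m}"
    hence "0 \<le> lam j" "lam j \<le> 1"
      using fam r eigen_family_eigenvalue_le_1[OF fam] unfolding eigen_family_def by force+
    hence "(lam j ^ t)\<^sup>2 \<le> 1" by (simp add: power_le_one)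
    thus "vs j u * lam j ^ t * (vs j u * lam j ^ t) \<le> (vs j u)\<^sup>2"
      using mult_left_mono[of "(lam j ^ t)\<^sup>2" 1 "(vs j u)\<^sup>2"] by (simp add: power2_eq_square algebra_simps)
  qed
  also have "norm_sq B \<le> (r\<^sup>2) ^ t" using B(2) q(2) mult_left_le[of "norm_sq q" "(r\<^sup>2) ^ t"] by simp
  finally show ?thesis by simp
qed

section \<open>Concentration of the lazy walk\<close>

lemma sym_walk_apply:
  "v \<in> V \<Longrightarrow> sym_walk z v = (z v + (\<Sum>w\<in>V. if E v w then z w / (sd v * sd w) else 0)) / 2"
  using finite_V
  by (simp add: sym_walk_def walk_kernel_def sum_divide_distrib[symmetric] sum.distrib
      distrib_right if_distrib[of "\<lambda>t. t * _"] cong: if_cong)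

lemma walk_eq_sym_walk_power:
  "v \<in> V \<Longrightarrow> walk V E t p v = sd v * (sym_walk ^^ t) (\<lambda>w. if w \<in> V then p w / sd w else 0) v"
proof (induction t arbitrary: v)
  case 0 thus ?case using sd_pos[of v] by simp
next
  case (Suc t)
  define z where "z = (sym_walk ^^ t) (\<lambda>w. if w \<in> V then p w / sd w else 0)"
  have v: "v \<in> V" by fact
  have "(\<Sum>w\<in>{w \<in> V. E v w}. walk V E t p w / d w) = (\<Sum>w\<in>{w \<in> V. E v w}. z w / sd w)"
  proof (rule sum.cong[OF refl])
    fix w assume "w \<in> {w \<in> V. E v w}"
    hence w: "w \<in> V" by auto
    show "walk V E t p w / d w = z w / sd w"
      using Suc.IH[OF w] sd_pos[OF w] unfolding sd_sq[OF w, symmetric] z_def by simp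
  qed
  also have "\<dots> = sd v * (\<Sum>w\<in>V. if E v w then z w / (sd v * sd w) else 0)"
    using sd_pos[OF v] finite_V by (simp add: sum.inter_filter sum_distrib_left if_distrib cong: if_cong)
  finally have "walk V E (Suc t) p v = (sd v * z v + sd v * (\<Sum>w\<in>V. if E v w then z w / (sd v * sd w) else 0)) / 2"
    using Suc.IH[OF v] by (simp add: Let_def z_def)
  also have "\<dots> = sd v * sym_walk z v" unfolding sym_walk_apply[OF v] by (simp add: algebra_simps)
  finally show ?case by (simp add: z_def)
qed

lemma Dnorm_sq_walk_indicator:
  assumes u: "u \<in> V"
  shows "Dnorm_sq V E (walk V E t (indicator_vec u)) = norm_sq ((sym_walk ^^ t) (indicator_vec u)) / d u"
proof -
  define Z where "Z = (sym_walk ^^ t) (indicator_vec u)"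
  have start: "(\<lambda>w. if w \<in> V then indicator_vec u w / sd w else 0) = (\<lambda>w. (1 / sd u) * indicator_vec u w)"
    using u by (auto simp: indicator_vec_def)
  have walk: "walk V E t (indicator_vec u) v = sd v * Z v / sd u" if "v \<in> V" for v
    using walk_eq_sym_walk_power[OF that, of t "indicator_vec u"]
    unfolding start sym_walk_power_scale Z_def by simp
  have "Dnorm_sq V E (walk V E t (indicator_vec u)) = (\<Sum>v\<in>V. (Z v)\<^sup>2 / d u)"
    unfolding Dnorm_sq_def
  proof (rule sum.cong[OF refl])
    fix v assume v: "v \<in> V"
    show "(walk V E t (indicator_vec u) v)\<^sup>2 / d v = (Z v)\<^sup>2 / d u"
      using sd_pos[OF v] sd_pos[OF u] unfolding walk[OF v] sd_sq[OF v, symmetric] sd_sq[OF u, symmetric]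
      by (simp add: power2_eq_square field_simps)
  qed
  also have "\<dots> = norm_sq Z / d u" unfolding norm_sq_def inner_V_def by (simp add: sum_divide_distrib power2_eq_square)
  finally show ?thesis unfolding Z_def .
qed

lemma markov_inequality_vol:
  assumes f: "\<And>u. u \<in> V \<Longrightarrow> f u \<ge> 0" and "B > 0"
  shows "vol V E {u\<in>V. f u > B * d u} \<le> (\<Sum>u\<in>V. f u) / B"
proof -
  have "vol V E {u\<in>V. f u > B * d u} \<le> (\<Sum>u\<in>{u\<in>V. f u > B * d u}. f u / B)"
    unfolding vol_def using \<open>B > 0\<close> by (intro sum_mono) (simp add: pos_le_divide_eq mult.commute)
  also have "\<dots> \<le> (\<Sum>u\<in>V. f u / B)" using f \<open>B > 0\<close> by (intro sum_mono2 finite_V) auto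
  finally show ?thesis by (simp add: sum_divide_distrib)
qed

lemma clusterable_qform_bound:
  assumes "clusterable V E k \<phi>" "\<phi> > 0"
  shows "\<exists>W. finite W \<and> card W \<le> k \<and>
    (\<forall>x. (\<forall>w\<in>W. inner_V x w = 0) \<longrightarrow> qform x \<le> max 0 (1 - \<phi>\<^sup>2 / 4) * norm_sq x)"
proof -
  obtain P where P: "finite P" "card P \<le> k" "\<forall>C\<in>P. C \<noteq> {}"
    "\<forall>C\<in>P. \<forall>C'\<in>P. C \<noteq> C' \<longrightarrow> C \<inter> C' = {}" "\<Union>P = V" "\<forall>C\<in>P. cond V E C \<ge> \<phi>"
    using assms(1) unfolding clusterable_def by blast
  have "\<forall>C\<in>P. expands \<phi> C" using P(3,5,6) cond_imp_expands by blast
  hence "qform x \<le> max 0 (1 - \<phi>\<^sup>2 / 4) * norm_sq x" if "\<forall>C\<in>P. inner_V x (sqrt_deg_on C) = 0" for x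
    using qform_le_orthogonal_to_clusters[OF P(1,4,5) _ _ that] assms(2) norm_sq_nonneg[of x]
    by (smt (verit) mult_right_mono)
  moreover have "card (sqrt_deg_on ` P) \<le> k" using card_image_le[OF P(1)] P(2) le_trans by blast
  ultimately show ?thesis using P(1) by (intro exI[of _ "sqrt_deg_on ` P"]) auto
qed

lemma eigen_family_sum_sq:
  assumes "eigen_family r m vs lam"
  shows "(\<Sum>u\<in>V. \<Sum>j<m. (vs j u)\<^sup>2) = real m"
proof -
  have "(\<Sum>u\<in>V. (vs j u)\<^sup>2) = 1" if "j < m" for j
    using assms that unfolding eigen_family_def orthonormal_def inner_V_def by (simp add: power2_eq_square)
  thus ?thesis by (subst sum.swap) simp
qed

lemma Dnorm_sq_walk_indicator_le:
  assumes fam: "eigen_family (max 0 (1 - \<phi>\<^sup>2 / 4)) m vs lam"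
    and bounded: "rayleigh_bounded (max 0 (1 - \<phi>\<^sup>2 / 4)) m vs"
    and \<phi>: "\<phi> > 0" and t: "real t \<ge> 2 * ln (vol V E V) / \<phi>\<^sup>2" and u: "u \<in> V"
  shows "Dnorm_sq V E (walk V E t (indicator_vec u)) \<le> ((\<Sum>j<m. (vs j u)\<^sup>2) + 1 / vol V E V) / d u"
proof -
  have "vol V E V > 0" using u by (intro vol_pos) auto
  hence "norm_sq ((sym_walk ^^ t) (indicator_vec u)) \<le> (\<Sum>j<m. (vs j u)\<^sup>2) + 1 / vol V E V"
    using norm_sq_sym_walk_power_indicator[OF fam bounded _ u, of t] lazy_decay_le_inverse[OF \<phi> _ t]
    by fastforce
  thus ?thesis unfolding Dnorm_sq_walk_indicator[OF u] using d_pos[OF u] by (simp add: divide_right_mono)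
qed

lemma vol_markov_good_set:
  assumes f: "\<And>u. u \<in> V \<Longrightarrow> f u \<ge> 0" and sum: "(\<Sum>u\<in>V. f u) \<le> 2 * real k"
    and "0 < \<alpha>" "k \<ge> 1" "V \<noteq> {}"
  shows "vol V E {u\<in>V. f u \<le> 2 * real k / (\<alpha> * vol V E V) * d u} \<ge> (1 - \<alpha>) * vol V E V"
proof -
  define B where "B = 2 * real k / (\<alpha> * vol V E V)"
  have vol_V: "vol V E V > 0" using assms(5) by (intro vol_pos) auto
  hence B: "B > 0" unfolding B_def using assms(3,4) by simp
  have "V - {u\<in>V. f u \<le> B * d u} = {u\<in>V. f u > B * d u}" by auto
  hence "vol V E (V - {u\<in>V. f u \<le> B * d u}) \<le> (\<Sum>u\<in>V. f u) / B"
    using markov_inequality_vol[OF f B] by simp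
  also have "\<dots> \<le> 2 * real k / B" using sum B by (simp add: divide_right_mono)
  also have "\<dots> = \<alpha> * vol V E V" unfolding B_def using assms(3,4) vol_V by simp
  finally show ?thesis using vol_diff[of "{u\<in>V. f u \<le> B * d u}" V] unfolding B_def[symmetric]
    by (auto simp: algebra_simps)
qed

lemma walk_concentration:
  fixes \<alpha> \<phi> :: real and k :: nat
  assumes \<alpha>: "0 < \<alpha>" "\<alpha> < 1" and k: "k \<ge> 1" and \<phi>: "\<phi> > 0" and clust: "clusterable V E k \<phi>"
  shows "\<exists>V'. V' \<subseteq> V \<and> vol V E V' \<ge> (1 - \<alpha>) * vol V E V \<and>
    (\<forall>t::nat. real t \<ge> 2 * ln (vol V E V) / \<phi>\<^sup>2 \<longrightarrow>
      (\<forall>u\<in>V'. Dnorm_sq V E (walk V E t (indicator_vec u)) \<le> 2 * real k / (\<alpha> * vol V E V)))"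
proof (cases "V = {}")
  case True
  thus ?thesis by (intro exI[of _ "{}"]) (simp add: vol_def)
next
  case False
  define r where "r = max 0 (1 - \<phi>\<^sup>2 / 4)"
  obtain W where "finite W" "card W \<le> k" "\<forall>x. (\<forall>w\<in>W. inner_V x w = 0) \<longrightarrow> qform x \<le> r * norm_sq x"
    using clusterable_qform_bound[OF clust \<phi>] unfolding r_def by blast
  then obtain m vs lam where m: "m \<le> k" and fam: "eigen_family r m vs lam" and bounded: "rayleigh_bounded r m vs"
    using exists_rayleigh_bounded_eigen_family[of W r] le_trans by blast
  define f where "f u = (\<Sum>j<m. (vs j u)\<^sup>2) + 1 / vol V E V" for u
  define B where "B = 2 * real k / (\<alpha> * vol V E V)"
  have "(\<Sum>u\<in>V. f u) = real m + real (card V) / vol V E V"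
    unfolding f_def sum.distrib eigen_family_sum_sq[OF fam] by simp
  also have "\<dots> \<le> 2 * real k"
  proof -
    have "real (card V) / vol V E V \<le> 1" using card_le_vol vol_pos[of V] False by simp
    thus ?thesis using m k by linarith
  qed
  finally have sum_f: "(\<Sum>u\<in>V. f u) \<le> 2 * real k" .
  have f_nonneg: "f u \<ge> 0" for u unfolding f_def using vol_nonneg[of V] by (simp add: sum_nonneg)
  have "vol V E {u\<in>V. f u \<le> B * d u} \<ge> (1 - \<alpha>) * vol V E V"
    unfolding B_def by (rule vol_markov_good_set[OF f_nonneg sum_f \<alpha>(1) k False])
  moreover have "Dnorm_sq V E (walk V E t (indicator_vec u)) \<le> B"
    if t: "real t \<ge> 2 * ln (vol V E V) / \<phi>\<^sup>2" and u: "u \<in> {u\<in>V. f u \<le> B * d u}" for t u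
  proof -
    have "Dnorm_sq V E (walk V E t (indicator_vec u)) \<le> f u / d u"
      using Dnorm_sq_walk_indicator_le[OF fam[unfolded r_def] bounded[unfolded r_def] \<phi> t] u
      unfolding f_def by simp
    also have "\<dots> \<le> B" using u d_pos[of u] by (simp add: divide_le_eq)
    finally show ?thesis .
  qed
  ultimately show ?thesis unfolding B_def[symmetric] by (intro exI[of _ "{u\<in>V. f u \<le> B * d u}"]) auto
qed

end

theorem mainTheorem13:
  fixes V :: "'a set" and E :: "'a \<Rightarrow> 'a \<Rightarrow> bool"
    and \<alpha> \<phi>_in :: real and k :: nat
  assumes "graph V E"
    and "0 < \<alpha>" and "\<alpha> < 1" and "k \<ge> 1" and "\<phi>_in > 0"
    and "clusterable V E k \<phi>_in"
    and "\<forall>v\<in>V. deg V E v \<ge> 1"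
  shows "\<exists>V'. V' \<subseteq> V \<and> vol V E V' \<ge> (1 - \<alpha>) * vol V E V \<and>
    (\<forall>t::nat. real t \<ge> 2 * ln (vol V E V) / \<phi>_in\<^sup>2 \<longrightarrow>
      (\<forall>u\<in>V'. Dnorm_sq V E (walk V E t (indicator_vec u))
                \<le> 2 * real k / (\<alpha> * vol V E V)))"
proof -
  interpret pos_deg_graph V E using assms(1,7) by unfold_locales
  show ?thesis by (rule walk_concentration[OF assms(2-6)])
qed

end
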